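(* Let $\mathcal{P}$ be a hereditary property of ordered graphs and $k$ a positive integer, and suppose that there are ordered graphs $G \in \mathcal{P}$ for which $t_{k+1}$, the size of the $(k+1)$-st largest homogeneous block of $G$, is arbitrarily large. Then $|\mathcal{P}_n| \geqslant \binom{n-3k-2}{k} = n^k/k! + O(n^{k-1})$ as $n \to \infty$, and in particular if $k = 1$, then $|\mathcal{P}_n| \geqslant n$ for every $n \in \mathbb{N}$.
   Context: Ordered graphs of order $n$ have vertex set $[n]$ with the natural order; a hereditary property is a collection of ordered graphs closed under order-preserving isomorphism and induced ordered subgraphs; $\mathcal{P}_n$ is the set of members with vertex set $[n]$. A homogeneous block of $G$ is a maximal set $B$ of consecutive vertices such that $\Gamma(x)\setminus\{y\}=\Gamma(y)\setminus\{x\}$ for all $x,y\in B$; the homogeneous block sequence $t_1\geqslant t_2\geqslant\dots$ lists the orders of the homogeneous blocks in non-increasing order (padded with zeros). *)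

theory Defs
  imports Main "HOL-Library.Multiset"
begin

text \<open>An ordered graph of order n: vertex set [n] = {1..n} with its natural order,
  represented as the pair (n, E) where E is a set of 2-element subsets of {1..n}.\<close>
type_synonym ograph = "nat \<times> nat set set"

definition ordered_graph :: "ograph \<Rightarrow> bool" where
  "ordered_graph G \<longleftrightarrow>
     (\<forall>e \<in> snd G. \<exists>x y. e = {x, y} \<and> x \<noteq> y \<and> x \<in> {1..fst G} \<and> y \<in> {1..fst G})"

definition induced_ordered_subgraph :: "ograph \<Rightarrow> ograph \<Rightarrow> bool" where
  "induced_ordered_subgraph H G \<longleftrightarrow>
     (\<exists>f. strict_mono_on {1..fst H} f \<and> f ` {1..fst H} \<subseteq> {1..fst G} \<and>
          (\<forall>i \<in> {1..fst H}. \<forall>j \<in> {1..fst H}. {i, j} \<in> snd H \<longleftrightarrow> {f i, f j} \<in> snd G))"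

text \<open>Since every graph has canonical vertex set [n], closure under order-preserving
  isomorphism is automatic; hereditary = closed under induced ordered subgraphs.\<close>
definition hereditary :: "ograph set \<Rightarrow> bool" where
  "hereditary P \<longleftrightarrow>
     (\<forall>G \<in> P. ordered_graph G) \<and>
     (\<forall>G \<in> P. \<forall>H. ordered_graph H \<and> induced_ordered_subgraph H G \<longrightarrow> H \<in> P)"

definition slice :: "ograph set \<Rightarrow> nat \<Rightarrow> nat set set set" where
  "slice P n = {E. (n, E) \<in> P}"

definition nbhd :: "ograph \<Rightarrow> nat \<Rightarrow> nat set" where
  "nbhd G x = {y. {x, y} \<in> snd G}"

definition homogeneous_set :: "ograph \<Rightarrow> nat set \<Rightarrow> bool" where
  "homogeneous_set G B \<longleftrightarrow>
     (\<exists>a b. a \<le> b \<and> B = {a..b} \<and> B \<subseteq> {1..fst G}) \<and>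
     (\<forall>x \<in> B. \<forall>y \<in> B. nbhd G x - {y} = nbhd G y - {x})"

definition homogeneous_blocks :: "ograph \<Rightarrow> nat set set" where
  "homogeneous_blocks G =
     {B. homogeneous_set G B \<and> (\<forall>B'. homogeneous_set G B' \<and> B \<subseteq> B' \<longrightarrow> B' = B)}"

text \<open>Homogeneous block sequence: block orders in non-increasing order, padded with zeros.
  hb_seq G i is t_i (1-indexed).\<close>
definition hb_seq :: "ograph \<Rightarrow> nat \<Rightarrow> nat" where
  "hb_seq G i =
     (let l = rev (sorted_list_of_multiset (image_mset card (mset_set (homogeneous_blocks G))))
      in if 1 \<le> i \<and> i \<le> length l then l ! (i - 1) else 0)"

end

theory Submission
  imports Defs
begin

text \<open>Choose \<open>k + 1\<close> large homogeneous blocks, from left to right. Every block but the last is a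
  maximal interval of twins, so the vertex right after it is separated from the block by some
  witness vertex. Keep these at most \<open>2k\<close> separators and witnesses and distribute the remaining
  \<open>M \<ge> n - 2k\<close> vertices over the blocks in the \<open>M choose k\<close> ways given by the \<open>k\<close>-subsets of the
  \<open>M\<close> slots. The induced ordered subgraphs are distinct: where two distributions first differ, one
  of them has a separator at a rank that the other gives to a twin of its block, and the witness
  distinguishes the two.

  For \<open>k = 1\<close> the bound \<open>n\<close> comes from one-parameter families of samples of the two blocks, moving
  the split point between them. Depending on how the blocks, the edges between them and the other
  vertices are joined, either the split point itself, a separating vertex, or the separator of the
  first block together with its witness can be read off the induced subgraph.\<close>

section \<open>Twins and homogeneous intervals\<close>

definition twins :: "ograph \<Rightarrow> nat \<Rightarrow> nat \<Rightarrow> bool" where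
  "twins G x y \<longleftrightarrow> (\<forall>z. z \<noteq> x \<longrightarrow> z \<noteq> y \<longrightarrow> ({x, z} \<in> snd G \<longleftrightarrow> {y, z} \<in> snd G))"

definition homogeneous_interval :: "ograph \<Rightarrow> nat \<Rightarrow> nat \<Rightarrow> bool" where
  "homogeneous_interval G a b \<longleftrightarrow> (\<forall>x\<in>{a..b}. \<forall>y\<in>{a..b}. twins G x y)"

lemma twins_sym: "twins G x y \<longleftrightarrow> twins G y x"
  unfolding twins_def by blast

lemma twins_refl: "twins G x x"
  unfolding twins_def by blast

lemma ordered_graph_edgeD:
  assumes "ordered_graph G" "{x, y} \<in> snd G"
  shows "x \<noteq> y" "x \<in> {1..fst G}" "y \<in> {1..fst G}"
proof -
  obtain a b where "{x, y} = {a, b}" "a \<noteq> b" "a \<in> {1..fst G}" "b \<in> {1..fst G}"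
    using assms unfolding ordered_graph_def by blast
  then show "x \<noteq> y" "x \<in> {1..fst G}" "y \<in> {1..fst G}"
    by (auto simp: doubleton_eq_iff)
qed

lemma twins_iff_nbhd:
  assumes "ordered_graph G"
  shows "twins G x y \<longleftrightarrow> nbhd G x - {y} = nbhd G y - {x}"
proof
  assume tw: "twins G x y"
  have "z \<in> nbhd G y - {x}" if "z \<in> nbhd G x - {y}" "twins G x y" for x y z
  proof -
    have z: "{x, z} \<in> snd G" "z \<noteq> y" using that unfolding nbhd_def by auto
    then have "z \<noteq> x" using ordered_graph_edgeD(1)[OF assms] by blast
    then show ?thesis using that(2) z unfolding twins_def nbhd_def by auto
  qed
  then show "nbhd G x - {y} = nbhd G y - {x}"
    using tw twins_sym by blast
next
  assume "nbhd G x - {y} = nbhd G y - {x}"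
  then show "twins G x y"
    unfolding twins_def nbhd_def by (auto simp: set_eq_iff)
qed

lemma homogeneous_set_iff:
  assumes "ordered_graph G"
  shows "homogeneous_set G B \<longleftrightarrow>
    (\<exists>a b. a \<le> b \<and> B = {a..b} \<and> B \<subseteq> {1..fst G}) \<and> (\<forall>x\<in>B. \<forall>y\<in>B. twins G x y)"
  unfolding homogeneous_set_def using twins_iff_nbhd[OF assms] by auto

lemma twins_trans:
  assumes xy: "twins G x y" and yz: "twins G y z"
  shows "twins G x z"
proof (cases "x = z \<or> x = y \<or> y = z")
  case True
  then show ?thesis
    using xy yz by (metis twins_refl)
next
  case False
  have "{x, y} \<in> snd G \<longleftrightarrow> {z, y} \<in> snd G"
  proof -
    have "{x, z} \<in> snd G \<longleftrightarrow> {y, z} \<in> snd G" "{y, x} \<in> snd G \<longleftrightarrow> {z, x} \<in> snd G"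
      using xy yz False unfolding twins_def by auto
    then show ?thesis
      by (simp add: insert_commute)
  qed
  then show ?thesis
    using xy yz unfolding twins_def by metis
qed

lemma homogeneous_blockE:
  assumes "ordered_graph G" and "B \<in> homogeneous_blocks G"
  obtains a b where "a \<le> b" "B = {a..b}" "B \<subseteq> {1..fst G}" "homogeneous_interval G a b"
    "\<And>B'. homogeneous_set G B' \<Longrightarrow> B \<subseteq> B' \<Longrightarrow> B' = B"
proof -
  have "homogeneous_set G B" and max: "\<And>B'. homogeneous_set G B' \<Longrightarrow> B \<subseteq> B' \<Longrightarrow> B' = B"
    using assms(2) unfolding homogeneous_blocks_def by auto
  then obtain a b where "a \<le> b" "B = {a..b}" "B \<subseteq> {1..fst G}" "\<forall>x\<in>B. \<forall>y\<in>B. twins G x y"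
    using homogeneous_set_iff[OF assms(1)] by auto
  then show ?thesis
    using that max unfolding homogeneous_interval_def by blast
qed

lemma homogeneous_blocks_disjoint:
  assumes og: "ordered_graph G"
    and B: "B \<in> homogeneous_blocks G" and B': "B' \<in> homogeneous_blocks G"
    and "B \<noteq> B'"
  shows "B \<inter> B' = {}"
proof (rule ccontr)
  assume "B \<inter> B' \<noteq> {}"
  then obtain c where c: "c \<in> B" "c \<in> B'" by blast
  obtain a b where ab: "a \<le> b" "B = {a..b}" "B \<subseteq> {1..fst G}" "homogeneous_interval G a b"
    and max: "\<And>B''. homogeneous_set G B'' \<Longrightarrow> B \<subseteq> B'' \<Longrightarrow> B'' = B"
    using homogeneous_blockE[OF og B] by blast
  obtain a' b' where ab': "a' \<le> b'" "B' = {a'..b'}" "B' \<subseteq> {1..fst G}" "homogeneous_interval G a' b'"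
    and max': "\<And>B''. homogeneous_set G B'' \<Longrightarrow> B' \<subseteq> B'' \<Longrightarrow> B'' = B'"
    using homogeneous_blockE[OF og B'] by blast
  have tw: "\<forall>x\<in>B. \<forall>y\<in>B. twins G x y" "\<forall>x\<in>B'. \<forall>y\<in>B'. twins G x y"
    using ab ab' unfolding homogeneous_interval_def by auto
  have "\<forall>x\<in>B \<union> B'. \<forall>y\<in>B \<union> B'. twins G x y"
    using tw c twins_trans twins_sym by (metis Un_iff)
  moreover have "B \<union> B' = {min a a'..max b b'}" "min a a' \<le> max b b'" "B \<union> B' \<subseteq> {1..fst G}"
    using ab ab' c by auto
  ultimately have "homogeneous_set G (B \<union> B')"
    unfolding homogeneous_set_iff[OF og] by blast
  then have "B \<union> B' = B" "B \<union> B' = B'"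
    using max max' by auto
  with \<open>B \<noteq> B'\<close> show False by auto
qed

lemma homogeneous_interval_outside:
  assumes "homogeneous_interval G lo hi" "x \<in> {lo..hi}" "x' \<in> {lo..hi}" "z \<noteq> x" "z \<noteq> x'"
  shows "{x, z} \<in> snd G \<longleftrightarrow> {x', z} \<in> snd G"
  using assms unfolding homogeneous_interval_def twins_def by blast

lemma homogeneous_interval_pairs:
  assumes h: "homogeneous_interval G lo hi"
    and m: "a \<in> {lo..hi}" "b \<in> {lo..hi}" "a' \<in> {lo..hi}" "b' \<in> {lo..hi}"
    and ne: "a \<noteq> b" "a' \<noteq> b'"
  shows "{a, b} \<in> snd G \<longleftrightarrow> {a', b'} \<in> snd G"
proof (cases "b' = a")
  case False
  have "{b, a} \<in> snd G \<longleftrightarrow> {b', a} \<in> snd G"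
    by (cases "b = b'") (use homogeneous_interval_outside[OF h m(2,4), of a] False ne in auto)
  also have "\<dots> \<longleftrightarrow> {b', a'} \<in> snd G"
    using homogeneous_interval_outside[OF h m(1,3), of b'] False ne by (metis insert_commute)
  finally show ?thesis by (simp add: insert_commute)
next
  case True
  have "{b, a} \<in> snd G \<longleftrightarrow> {a', a} \<in> snd G"
    by (cases "b = a'") (use homogeneous_interval_outside[OF h m(2,3)] True ne in auto)
  then show ?thesis using True by (simp add: insert_commute)
qed

lemma not_homogeneous_Suc_witness:
  assumes "homogeneous_interval G lo hi" "\<not> homogeneous_interval G lo (Suc hi)"
  obtains x w where "x \<in> {lo..hi}" "w \<noteq> x" "w \<noteq> Suc hi"
    "({x, w} \<in> snd G) \<noteq> ({Suc hi, w} \<in> snd G)"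
proof -
  obtain x y where xy: "x \<in> {lo..Suc hi}" "y \<in> {lo..Suc hi}" "\<not> twins G x y"
    using assms(2) unfolding homogeneous_interval_def by blast
  have "\<exists>x\<in>{lo..hi}. \<not> twins G x (Suc hi)"
  proof (cases "x = Suc hi")
    case True
    then have "y \<noteq> Suc hi" using xy twins_refl by metis
    then show ?thesis using xy True twins_sym by (metis atLeastAtMost_iff le_SucE)
  next
    case False
    then have "x \<in> {lo..hi}" using xy by auto
    moreover have "y = Suc hi"
      using xy assms(1) \<open>x \<in> {lo..hi}\<close> unfolding homogeneous_interval_def
      by (metis atLeastAtMost_iff le_SucE)
    ultimately show ?thesis using xy by blast
  qed
  then show ?thesis
    using that unfolding twins_def by blast
qed

section \<open>Large blocks from the homogeneous block sequence\<close>

lemma finite_homogeneous_blocks: "finite (homogeneous_blocks G)"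
proof (rule finite_subset)
  show "homogeneous_blocks G \<subseteq> Pow {1..fst G}"
    unfolding homogeneous_blocks_def homogeneous_set_def by auto
qed simp

lemma card_large_blocks_ge:
  assumes "m \<le> hb_seq G (k + 1)" "1 \<le> m"
  shows "k + 1 \<le> card {B \<in> homogeneous_blocks G. m \<le> card B}"
proof -
  define Ms where "Ms = image_mset card (mset_set (homogeneous_blocks G))"
  define xs where "xs = sorted_list_of_multiset Ms"
  define l where "l = rev xs"
  have "hb_seq G (k + 1) = (if k + 1 \<le> length l then l ! k else 0)"
    unfolding hb_seq_def l_def xs_def Ms_def by (simp add: Let_def)
  then have len: "k + 1 \<le> length l" and lk: "m \<le> l ! k"
    using assms by (auto split: if_splits)
  have "m \<le> l ! j" if "j \<le> k" for j
  proof -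
    have "xs ! (length xs - Suc k) \<le> xs ! (length xs - Suc j)"
      using len that unfolding l_def xs_def by (intro sorted_nth_mono) auto
    then show ?thesis
      using len that lk unfolding l_def by (simp add: rev_nth)
  qed
  then have "{0..k} \<subseteq> {j. j < length l \<and> m \<le> l ! j}"
    using len by auto
  then have "card {0..k} \<le> card {j. j < length l \<and> m \<le> l ! j}"
    by (intro card_mono) auto
  also have "\<dots> = size (filter_mset (\<lambda>x. m \<le> x) Ms)"
  proof -
    have "mset (filter (\<lambda>x. m \<le> x) l) = filter_mset (\<lambda>x. m \<le> x) Ms"
      unfolding l_def xs_def by simp
    then show ?thesis
      by (metis length_filter_conv_card size_mset)
  qed
  also have "\<dots> = card {B \<in> homogeneous_blocks G. m \<le> card B}"
    unfolding Ms_def filter_mset_image_mset using finite_homogeneous_blocks by simp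
  finally show ?thesis
    by simp
qed

lemma disjoint_intervals_sorted:
  fixes \<B> :: "nat set set"
  assumes "finite \<B>" "\<forall>B\<in>\<B>. \<exists>a b. a \<le> b \<and> B = {a..b}"
    "\<forall>B\<in>\<B>. \<forall>B'\<in>\<B>. B \<noteq> B' \<longrightarrow> B \<inter> B' = {}"
  shows "\<exists>lo hi. (\<forall>j<card \<B>. lo j \<le> hi j \<and> {lo j..hi j} \<in> \<B>) \<and>
    (\<forall>j. Suc j < card \<B> \<longrightarrow> hi j < lo (Suc j))"
  using assms
proof (induction "card \<B>" arbitrary: \<B>)
  case 0
  then show ?case by auto
next
  case (Suc r)
  define \<mu> where "\<mu> = Max (Min ` \<B>)"
  have "\<mu> \<in> Min ` \<B>"
    unfolding \<mu>_def using Suc by (intro Max_in) auto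
  then obtain Bs where Bs: "Bs \<in> \<B>" "Min Bs = \<mu>" by auto
  obtain as bs where asbs: "as \<le> bs" "Bs = {as..bs}"
    using Suc.prems(2) Bs by blast
  have le_\<mu>: "Min B \<le> \<mu>" if "B \<in> \<B>" for B
    unfolding \<mu>_def using Suc.prems(1) that by (intro Max_ge) auto
  define \<B>' where "\<B>' = \<B> - {Bs}"
  have r: "r = card \<B>'"
    using Suc.hyps(2) Bs Suc.prems(1) unfolding \<B>'_def by simp
  obtain lo hi where IH: "\<forall>j<card \<B>'. lo j \<le> hi j \<and> {lo j..hi j} \<in> \<B>'"
    "\<forall>j. Suc j < card \<B>' \<longrightarrow> hi j < lo (Suc j)"
    using Suc.hyps(1)[OF r] Suc.prems unfolding \<B>'_def by auto
  have last: "hi j < as" if "Suc j = r" for j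
  proof -
    have B: "{lo j..hi j} \<in> \<B>" "{lo j..hi j} \<noteq> Bs" "lo j \<le> hi j"
      using IH that r unfolding \<B>'_def by auto
    then have "{lo j..hi j} \<inter> Bs = {}"
      using Suc.prems(3) Bs by blast
    moreover have "lo j \<le> as"
    proof -
      have "Min {lo j..hi j} = lo j" "Min Bs = as"
        using B(3) asbs by (auto intro: Min_eqI)
      then show ?thesis
        using le_\<mu>[OF B(1)] Bs by simp
    qed
    ultimately show ?thesis
      using asbs by (meson atLeastAtMost_iff disjoint_iff not_le order_refl)
  qed
  show ?case
  proof (intro exI conjI allI impI)
    fix j assume "j < card \<B>"
    then show "(lo(r := as)) j \<le> (hi(r := bs)) j" "{(lo(r := as)) j..(hi(r := bs)) j} \<in> \<B>"
      using IH asbs Bs r Suc.hyps(2) unfolding \<B>'_def by (cases "j = r"; auto)+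
  next
    fix j assume "Suc j < card \<B>"
    then show "(hi(r := bs)) j < (lo(r := as)) (Suc j)"
      using IH r Suc.hyps(2) last by (cases "Suc j = r") auto
  qed
qed

definition block_chain :: "ograph \<Rightarrow> nat \<Rightarrow> nat \<Rightarrow> (nat \<Rightarrow> nat) \<Rightarrow> (nat \<Rightarrow> nat) \<Rightarrow> bool" where
  "block_chain G k m lo hi \<longleftrightarrow>
     (\<forall>j\<le>k. 1 \<le> lo j \<and> lo j \<le> hi j \<and> hi j \<le> fst G \<and> homogeneous_interval G (lo j) (hi j) \<and>
       m \<le> Suc (hi j) - lo j) \<and>
     (\<forall>j<k. hi j < lo (Suc j) \<and> \<not> homogeneous_interval G (lo j) (Suc (hi j)))"

lemma block_chain_less:
  assumes "block_chain G k m lo hi" "j < i" "i \<le> k"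
  shows "hi j < lo i"
  using assms(2,3)
proof (induction i)
  case (Suc i)
  have "j = i \<or> hi j < lo i"
    using Suc by (auto simp: less_Suc_eq)
  moreover have "lo i \<le> hi i" "hi i < lo (Suc i)"
    using Suc assms(1) unfolding block_chain_def by auto
  ultimately show ?case by fastforce
qed simp

lemma block_chain_le:
  assumes "block_chain G k m lo hi" "i \<le> j" "j \<le> k"
  shows "lo i \<le> lo j" "hi i \<le> hi j"
proof -
  have "i = j \<or> hi i < lo j"
    using block_chain_less[OF assms(1), of i j] assms(2,3) by linarith
  moreover have "lo i \<le> hi i" "lo j \<le> hi j"
    using assms unfolding block_chain_def by auto
  ultimately show "lo i \<le> lo j" "hi i \<le> hi j"
    by auto
qed

lemma sorted_large_blocks:
  assumes og: "ordered_graph G" and "m \<le> hb_seq G (k + 1)" "1 \<le> m"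
  obtains lo hi
  where "\<forall>j\<le>k. lo j \<le> hi j \<and> {lo j..hi j} \<in> homogeneous_blocks G \<and> m \<le> card {lo j..hi j}"
    "\<forall>j<k. hi j < lo (Suc j)"
proof -
  have "k + 1 \<le> card {B \<in> homogeneous_blocks G. m \<le> card B}"
    using card_large_blocks_ge[OF assms(2,3)] .
  then obtain \<B> where BB: "\<B> \<subseteq> {B \<in> homogeneous_blocks G. m \<le> card B}" "card \<B> = k + 1" "finite \<B>"
    by (meson obtain_subset_with_card_n)
  have blocks: "B \<in> homogeneous_blocks G" if "B \<in> \<B>" for B
    using BB(1) that by auto
  have "\<forall>B\<in>\<B>. \<exists>a b. a \<le> b \<and> B = {a..b}"
  proof
    fix B assume "B \<in> \<B>"
    then obtain a b where "a \<le> b" "B = {a..b}"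
      using homogeneous_blockE[OF og blocks] by metis
    then show "\<exists>a b. a \<le> b \<and> B = {a..b}" by blast
  qed
  moreover have "\<forall>B\<in>\<B>. \<forall>B'\<in>\<B>. B \<noteq> B' \<longrightarrow> B \<inter> B' = {}"
    using homogeneous_blocks_disjoint[OF og blocks blocks] by blast
  ultimately obtain lo hi where LH: "\<forall>j<card \<B>. lo j \<le> hi j \<and> {lo j..hi j} \<in> \<B>"
    "\<forall>j. Suc j < card \<B> \<longrightarrow> hi j < lo (Suc j)"
    using disjoint_intervals_sorted[OF BB(3)] by blast
  have "lo j \<le> hi j \<and> {lo j..hi j} \<in> homogeneous_blocks G \<and> m \<le> card {lo j..hi j}" if "j \<le> k" for j
  proof -
    have "lo j \<le> hi j" "{lo j..hi j} \<in> \<B>"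
      using LH(1) BB(2) that by auto
    then show ?thesis
      using BB(1) by auto
  qed
  moreover have "\<forall>j<k. hi j < lo (Suc j)"
    using LH(2) BB(2) by simp
  ultimately show ?thesis
    using that by blast
qed

lemma block_chain_of_sorted_blocks:
  assumes og: "ordered_graph G"
    and blocks: "\<forall>j\<le>k. lo j \<le> hi j \<and> {lo j..hi j} \<in> homogeneous_blocks G \<and> m \<le> card {lo j..hi j}"
    and sorted: "\<forall>j<k. hi j < lo (Suc j)"
  shows "block_chain G k m lo hi"
proof -
  have block: "1 \<le> lo j \<and> lo j \<le> hi j \<and> hi j \<le> fst G \<and> homogeneous_interval G (lo j) (hi j) \<and>
      m \<le> Suc (hi j) - lo j \<and>
      (\<forall>B'. homogeneous_set G B' \<and> {lo j..hi j} \<subseteq> B' \<longrightarrow> B' = {lo j..hi j})" if "j \<le> k" for j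
  proof -
    have j: "lo j \<le> hi j" "{lo j..hi j} \<in> homogeneous_blocks G" "m \<le> card {lo j..hi j}"
      using blocks that by auto
    obtain a b where "{lo j..hi j} = {a..b}" "{lo j..hi j} \<subseteq> {1..fst G}"
      "homogeneous_interval G a b"
      "\<And>B'. homogeneous_set G B' \<Longrightarrow> {lo j..hi j} \<subseteq> B' \<Longrightarrow> B' = {lo j..hi j}"
      using homogeneous_blockE[OF og j(2)] by metis
    then show ?thesis
      using j by auto
  qed
  have "\<not> homogeneous_interval G (lo j) (Suc (hi j))" if "j < k" for j
  proof
    assume hom: "homogeneous_interval G (lo j) (Suc (hi j))"
    have "Suc (hi j) \<le> fst G"
      using block[of "Suc j"] sorted that by fastforce
    then have "homogeneous_set G {lo j..Suc (hi j)}"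
      unfolding homogeneous_set_iff[OF og] using hom block[of j] that
      unfolding homogeneous_interval_def by auto
    then have "{lo j..Suc (hi j)} = {lo j..hi j}"
      using block[of j] that by auto
    moreover have "Suc (hi j) \<in> {lo j..Suc (hi j)}"
      using block[of j] that by simp
    ultimately show False
      by simp
  qed
  then show ?thesis
    unfolding block_chain_def using block sorted by auto
qed

lemma obtain_block_chain:
  assumes her: "hereditary P" and large: "\<forall>m. \<exists>G\<in>P. hb_seq G (k + 1) \<ge> m"
  obtains G lo hi where "G \<in> P" "block_chain G k m lo hi"
proof -
  obtain G where GP: "G \<in> P" and hG: "Suc m \<le> hb_seq G (k + 1)"
    using large by blast
  have og: "ordered_graph G"
    using her GP unfolding hereditary_def by blast
  obtain lo hi
    where "\<forall>j\<le>k. lo j \<le> hi j \<and> {lo j..hi j} \<in> homogeneous_blocks G \<and> Suc m \<le> card {lo j..hi j}"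
    "\<forall>j<k. hi j < lo (Suc j)"
    by (rule sorted_large_blocks[OF og hG]) simp
  then have "block_chain G k (Suc m) lo hi"
    by (intro block_chain_of_sorted_blocks[OF og]) auto
  then have "block_chain G k m lo hi"
    unfolding block_chain_def by auto
  with GP show ?thesis
    by (rule that)
qed

section \<open>Induced ordered subgraphs on vertex subsets\<close>

text \<open>A vertex set \<open>S\<close> induces the ordered graph on \<open>[card S]\<close> obtained by renaming each
  \<open>y \<in> S\<close> to its rank in \<open>S\<close>.\<close>

definition rank :: "nat set \<Rightarrow> nat \<Rightarrow> nat" where
  "rank S y = card (S \<inter> {..y})"

definition induced_edges :: "ograph \<Rightarrow> nat set \<Rightarrow> nat set set" where
  "induced_edges G S = {{rank S x, rank S y} | x y. x \<in> S \<and> y \<in> S \<and> {x, y} \<in> snd G}"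

lemma rank_less:
  assumes "finite S" "y \<in> S" "x < y"
  shows "rank S x < rank S y"
proof -
  have "y \<in> S \<inter> {..y}" "y \<notin> S \<inter> {..x}" "S \<inter> {..x} \<subseteq> S \<inter> {..y}"
    using assms by auto
  then have "S \<inter> {..x} \<subset> S \<inter> {..y}"
    by blast
  then show ?thesis
    unfolding rank_def using assms(1) by (simp add: psubset_card_mono)
qed

lemma card_Int_lessThan_less_rank:
  assumes "finite S" "x \<in> S" "l \<le> x"
  shows "card (S \<inter> {..<l}) < rank S x"
proof -
  have "x \<in> S \<inter> {..x}" "x \<notin> S \<inter> {..<l}" "S \<inter> {..<l} \<subseteq> S \<inter> {..x}"
    using assms by auto
  then have "S \<inter> {..<l} \<subset> S \<inter> {..x}"
    by blast
  then show ?thesis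
    unfolding rank_def using assms(1) by (simp add: psubset_card_mono)
qed

lemma rank_Suc:
  assumes "finite S" "Suc h \<in> S"
  shows "rank S (Suc h) = Suc (card (S \<inter> {..h}))"
proof -
  have "S \<inter> {..Suc h} = insert (Suc h) (S \<inter> {..h})"
    using assms(2) by (auto simp: le_Suc_eq)
  then show ?thesis
    unfolding rank_def using assms(1) by simp
qed

lemma rank_mono: "finite S \<Longrightarrow> x \<le> y \<Longrightarrow> rank S x \<le> rank S y"
  unfolding rank_def by (intro card_mono) auto

lemma inj_on_rank: "finite S \<Longrightarrow> inj_on (rank S) S"
  by (intro linorder_inj_onI') (metis less_irrefl rank_less)

lemma rank_image:
  assumes "finite S"
  shows "rank S ` S = {1..card S}"
proof (rule card_subset_eq)
  show "rank S ` S \<subseteq> {1..card S}"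
    unfolding rank_def using assms
    by (auto simp: Suc_le_eq card_gt_0_iff intro!: card_mono)
  show "card (rank S ` S) = card {1..card S}"
    using card_image[OF inj_on_rank[OF assms]] by simp
qed simp

lemma rank_in_range: "finite S \<Longrightarrow> x \<in> S \<Longrightarrow> rank S x \<in> {1..card S}"
  using rank_image by blast

lemma ex_rank_eq:
  assumes "finite S" "1 \<le> p" "p \<le> card S"
  obtains y where "y \<in> S" "rank S y = p"
  using rank_image[OF assms(1)] assms(2,3) by (metis atLeastAtMost_iff imageE)

lemma induced_edges_iff:
  assumes "finite S" "x \<in> S" "y \<in> S"
  shows "{rank S x, rank S y} \<in> induced_edges G S \<longleftrightarrow> {x, y} \<in> snd G"
proof
  assume "{rank S x, rank S y} \<in> induced_edges G S"
  then obtain x' y' where xy': "{rank S x, rank S y} = {rank S x', rank S y'}" "x' \<in> S" "y' \<in> S"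
    "{x', y'} \<in> snd G"
    unfolding induced_edges_def by blast
  then have "{x, y} = {x', y'}"
    using inj_on_rank[OF assms(1)] assms(2,3)
    by (simp add: doubleton_eq_iff inj_on_eq_iff)
  then show "{x, y} \<in> snd G"
    using xy'(4) by simp
qed (use assms in \<open>auto simp: induced_edges_def\<close>)

lemma induced_edges_eq_transfer:
  assumes "induced_edges G S = induced_edges G S'"
    "finite S" "finite S'" "x \<in> S" "y \<in> S" "x' \<in> S'" "y' \<in> S'"
    "rank S x = rank S' x'" "rank S y = rank S' y'"
  shows "{x, y} \<in> snd G \<longleftrightarrow> {x', y'} \<in> snd G"
  using induced_edges_iff[OF assms(2,4,5), of G] induced_edges_iff[OF assms(3,6,7), of G]
    assms(1,8,9)
  by simp

lemma induced_edges_neq: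
  assumes "finite S" "finite S'" "x \<in> S" "y \<in> S" "x' \<in> S'" "y' \<in> S'"
    "rank S x = rank S' x'" "rank S y = rank S' y'"
    "({x, y} \<in> snd G) \<noteq> ({x', y'} \<in> snd G)"
  shows "induced_edges G S \<noteq> induced_edges G S'"
  using induced_edges_eq_transfer assms by blast

lemma induced_edges_in_slice:
  assumes her: "hereditary P" and GP: "G \<in> P" and S: "S \<subseteq> {1..fst G}"
  shows "induced_edges G S \<in> slice P (card S)"
proof -
  define H where "H = (card S, induced_edges G S)"
  have og: "ordered_graph G"
    using her GP unfolding hereditary_def by blast
  have fin: "finite S"
    using S finite_subset by blast
  define f where "f = the_inv_into S (rank S)"
  have fS: "f p \<in> S" and rank_f: "rank S (f p) = p" if "p \<in> {1..card S}" for p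
    using that rank_image[OF fin] the_inv_into_into[OF inj_on_rank[OF fin]]
      f_the_inv_into_f[OF inj_on_rank[OF fin]] unfolding f_def by auto
  have "ordered_graph H"
    unfolding ordered_graph_def H_def
  proof
    fix e assume "e \<in> snd (card S, induced_edges G S)"
    then obtain x y where "e = {rank S x, rank S y}" "x \<in> S" "y \<in> S" "{x, y} \<in> snd G"
      unfolding induced_edges_def by auto
    moreover have "rank S x \<noteq> rank S y"
      using calculation ordered_graph_edgeD(1)[OF og] inj_on_rank[OF fin] by (metis inj_on_eq_iff)
    ultimately show "\<exists>x y. e = {x, y} \<and> x \<noteq> y \<and> x \<in> {1..fst (card S, induced_edges G S)} \<and>
        y \<in> {1..fst (card S, induced_edges G S)}"
      using rank_in_range[OF fin] by auto
  qed
  moreover have "induced_ordered_subgraph H G"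
    unfolding induced_ordered_subgraph_def H_def
  proof (intro exI conjI)
    show "strict_mono_on {1..fst (card S, induced_edges G S)} f"
    proof (rule strict_mono_onI)
      fix p q assume "p \<in> {1..fst (card S, induced_edges G S)}"
        "q \<in> {1..fst (card S, induced_edges G S)}" "p < q"
      then show "f p < f q"
        using rank_mono[OF fin, of "f q" "f p"] rank_f by (metis fst_conv leD le_less_linear)
    qed
    show "f ` {1..fst (card S, induced_edges G S)} \<subseteq> {1..fst G}"
      using fS S by auto
    show "\<forall>i\<in>{1..fst (card S, induced_edges G S)}. \<forall>j\<in>{1..fst (card S, induced_edges G S)}.
        ({i, j} \<in> snd (card S, induced_edges G S)) = ({f i, f j} \<in> snd G)"
      using induced_edges_iff[OF fin fS fS] rank_f by simp
  qed
  ultimately have "H \<in> P"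
    using her GP unfolding hereditary_def by blast
  then show ?thesis
    unfolding H_def slice_def by simp
qed

lemma finite_slice:
  assumes "hereditary P"
  shows "finite (slice P n)"
proof (rule finite_subset)
  show "slice P n \<subseteq> Pow (Pow {1..n})"
  proof
    fix E assume "E \<in> slice P n"
    then have "ordered_graph (n, E)"
      using assms unfolding slice_def hereditary_def by auto
    then show "E \<in> Pow (Pow {1..n})"
      unfolding ordered_graph_def by fastforce
  qed
qed simp

lemma card_le_card_slice:
  assumes "hereditary P" "inj_on f I" "f ` I \<subseteq> slice P n"
  shows "card I \<le> card (slice P n)"
  using card_mono[OF finite_slice[OF assms(1)] assms(3)] card_image[OF assms(2)] by simp

lemma Suc_card_le_card_slice:
  assumes "hereditary P" "finite I" "inj_on f I" "f ` I \<subseteq> slice P n" "K \<in> slice P n" "K \<notin> f ` I"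
  shows "Suc (card I) \<le> card (slice P n)"
proof -
  have "card (insert K (f ` I)) = Suc (card I)"
    using card_image[OF assms(3)] assms(2,6) by simp
  then show ?thesis
    using card_mono[OF finite_slice[OF assms(1)]] assms(4,5) by (metis insert_subset)
qed

section \<open>The lower bound from \<open>k + 1\<close> large blocks\<close>

lemma mem_interval_if_rank_between:
  assumes "finite S" "u \<in> S" "card (S \<inter> {..<lo}) < rank S u" "rank S u \<le> card (S \<inter> {..hi})"
  shows "u \<in> {lo..hi}"
proof -
  have "lo \<le> u"
  proof (rule ccontr)
    assume "\<not> lo \<le> u"
    then have "rank S u \<le> card (S \<inter> {..<lo})"
      unfolding rank_def using assms(1) by (intro card_mono) auto
    with assms(3) show False by simp
  qed
  moreover have "u \<le> hi"
    using rank_less[OF assms(1,2), of hi] assms(4) unfolding rank_def by linarith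
  ultimately show ?thesis by simp
qed

lemma induced_edges_eq_twins:
  assumes eq: "induced_edges G S = induced_edges G S'" and fin: "finite S" "finite S'"
    and card: "card S = card S'" and hom: "homogeneous_interval G lo hi"
    and xyz: "x \<in> S" "y \<in> S" "z \<in> S" "z \<noteq> x" "z \<noteq> y"
    and x: "card (S' \<inter> {..<lo}) < rank S x" "rank S x \<le> card (S' \<inter> {..hi})"
    and y: "card (S' \<inter> {..<lo}) < rank S y" "rank S y \<le> card (S' \<inter> {..hi})"
  shows "{x, z} \<in> snd G \<longleftrightarrow> {y, z} \<in> snd G"
proof -
  have "\<exists>u'\<in>S'. rank S' u' = rank S u" if "u \<in> S" for u
    using rank_in_range[OF fin(1) that] card ex_rank_eq[OF fin(2)] by (metis atLeastAtMost_iff)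
  then obtain x' y' z' where x': "x' \<in> S'" "rank S' x' = rank S x"
    and y': "y' \<in> S'" "rank S' y' = rank S y" and z': "z' \<in> S'" "rank S' z' = rank S z"
    using xyz by metis
  have "x' \<in> {lo..hi}" "y' \<in> {lo..hi}"
    using mem_interval_if_rank_between[OF fin(2)] x x' y y' by simp_all
  moreover have "z' \<noteq> x'" "z' \<noteq> y'"
    using x' y' z' xyz inj_on_rank[OF fin(1)] by (metis inj_on_eq_iff)+
  ultimately have "{x', z'} \<in> snd G \<longleftrightarrow> {y', z'} \<in> snd G"
    using homogeneous_interval_outside[OF hom] by blast
  then show ?thesis
    using induced_edges_eq_transfer[OF eq fin] xyz x' y' z' by metis
qed

definition slot_block :: "nat set \<Rightarrow> nat \<Rightarrow> nat" where
  "slot_block X s = card {x \<in> X. x < s}"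

lemma slot_block_mono: "finite X \<Longrightarrow> s \<le> t \<Longrightarrow> slot_block X s \<le> slot_block X t"
  unfolding slot_block_def by (intro card_mono) auto

lemma slot_block_le_card: "finite X \<Longrightarrow> slot_block X s \<le> card X"
  unfolding slot_block_def by (intro card_mono) auto

lemma slot_block_less_card: "finite X \<Longrightarrow> c \<in> X \<Longrightarrow> slot_block X c < card X"
  unfolding slot_block_def by (intro psubset_card_mono) auto

lemma slot_block_after_mem:
  assumes "finite X" "c \<in> X" "c < s"
  shows "Suc (slot_block X c) \<le> slot_block X s"
proof -
  have "card (insert c {x \<in> X. x < c}) \<le> slot_block X s"
    unfolding slot_block_def using assms by (intro card_mono) auto
  then show ?thesis
    unfolding slot_block_def using assms(1) by simp
qed

lemma slot_block_Suc_nonmem: "c \<notin> X \<Longrightarrow> slot_block X (Suc c) = slot_block X c"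
  unfolding slot_block_def by (metis less_Suc_eq)

lemma slot_block_cong: "\<forall>x<c. x \<in> X \<longleftrightarrow> x \<in> X' \<Longrightarrow> s \<le> c \<Longrightarrow> slot_block X s = slot_block X' s"
  unfolding slot_block_def by (metis (lifting) less_le_trans)

lemma slot_block_less_first_difference:
  assumes "finite X'" "\<forall>x<c. x \<in> X \<longleftrightarrow> x \<in> X'" "c \<in> X" "finite X"
  shows "slot_block X' s < slot_block X c \<longleftrightarrow> slot_block X s < slot_block X c"
proof (cases "s \<le> c")
  case False
  then have "slot_block X c \<le> slot_block X' s"
    using slot_block_mono[OF assms(1), of c s] slot_block_cong[OF assms(2), of c] by simp
  then show ?thesis
    using slot_block_after_mem[OF assms(4,3), of s] False by simp
qed (simp add: slot_block_cong[OF assms(2)])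

lemma slot_block_le_first_difference:
  assumes "\<forall>x<c. x \<in> X \<longleftrightarrow> x \<in> X'" "c \<in> X" "c \<notin> X'" "finite X"
  shows "{s \<in> A. slot_block X s \<le> slot_block X c} \<subseteq> {s \<in> A. slot_block X' s \<le> slot_block X c}"
    and "Suc c \<in> A \<Longrightarrow> Suc c \<in> {s \<in> A. slot_block X' s \<le> slot_block X c}"
    and "Suc c \<notin> {s \<in> A. slot_block X s \<le> slot_block X c}"
proof -
  show "{s \<in> A. slot_block X s \<le> slot_block X c} \<subseteq> {s \<in> A. slot_block X' s \<le> slot_block X c}"
  proof
    fix s assume "s \<in> {s \<in> A. slot_block X s \<le> slot_block X c}"
    then have s: "s \<in> A" "slot_block X s \<le> slot_block X c"
      by auto
    have "s \<le> c"
    proof (rule ccontr)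
      assume "\<not> s \<le> c"
      then have "Suc (slot_block X c) \<le> slot_block X s"
        using slot_block_after_mem[OF assms(4,2)] by simp
      with s(2) show False
        by simp
    qed
    then show "s \<in> {s \<in> A. slot_block X' s \<le> slot_block X c}"
      using s slot_block_cong[OF assms(1)] by simp
  qed
  show "Suc c \<in> A \<Longrightarrow> Suc c \<in> {s \<in> A. slot_block X' s \<le> slot_block X c}"
    using slot_block_Suc_nonmem[OF assms(3)] slot_block_cong[OF assms(1), of c] by simp
  show "Suc c \<notin> {s \<in> A. slot_block X s \<le> slot_block X c}"
    using slot_block_after_mem[OF assms(4,2), of "Suc c"] by simp
qed

text \<open>For a \<open>k\<close>-subset \<open>X\<close> of the slots \<open>{1..M}\<close>, slot \<open>s\<close> receives a vertex of block
  \<open>slot_block X s\<close>: the elements of \<open>X\<close> mark where to pass on to the next block.\<close>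

definition placement :: "(nat \<Rightarrow> nat \<Rightarrow> nat) \<Rightarrow> nat set \<Rightarrow> nat \<Rightarrow> nat set \<Rightarrow> nat set" where
  "placement \<pi> F M X = F \<union> (\<lambda>s. \<pi> (slot_block X s) s) ` {1..M}"

context
  fixes G :: ograph and k m M :: nat and lo hi x0 w :: "nat \<Rightarrow> nat"
    and F :: "nat set" and \<pi> :: "nat \<Rightarrow> nat \<Rightarrow> nat"
  assumes chain: "block_chain G k m lo hi"
    and witness: "\<forall>j<k. x0 j \<in> {lo j..hi j} \<and> w j \<noteq> x0 j \<and> w j \<noteq> Suc (hi j) \<and>
      ({x0 j, w j} \<in> snd G) \<noteq> ({Suc (hi j), w j} \<in> snd G)"
    and F_def: "F = (\<lambda>j. Suc (hi j)) ` {..<k} \<union> w ` {..<k}"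
    and F_sub: "F \<subseteq> {1..fst G}"
    and tokens: "\<forall>j\<le>k. inj_on (\<pi> j) {1..M} \<and> \<pi> j ` {1..M} \<subseteq> {lo j..hi j} - F"
begin

abbreviation slot_sets :: "nat set set" where
  "slot_sets \<equiv> {X. X \<subseteq> {1..M} \<and> card X = k}"

abbreviation token :: "nat set \<Rightarrow> nat \<Rightarrow> nat" where
  "token X s \<equiv> \<pi> (slot_block X s) s"

lemma slot_block_le: "X \<in> slot_sets \<Longrightarrow> slot_block X s \<le> k"
  using slot_block_le_card[of X] finite_subset[of X "{1..M}"] by auto

lemma token_mem:
  assumes "X \<in> slot_sets" "s \<in> {1..M}"
  shows "token X s \<in> {lo (slot_block X s)..hi (slot_block X s)} - F"
  using tokens slot_block_le[OF assms(1)] assms(2) by blast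

lemma token_le_hi_iff:
  assumes "X \<in> slot_sets" "s \<in> {1..M}" "i \<le> k"
  shows "token X s \<le> hi i \<longleftrightarrow> slot_block X s \<le> i"
proof -
  define j where "j = slot_block X s"
  have "token X s \<in> {lo j..hi j}" "j \<le> k"
    using token_mem[OF assms(1,2)] slot_block_le[OF assms(1)] j_def by auto
  moreover have "hi j \<le> hi i" if "j \<le> i"
    using block_chain_le[OF chain that assms(3)] by simp
  moreover have "hi i < lo j" if "i < j"
    using block_chain_less[OF chain] that \<open>j \<le> k\<close> by blast
  ultimately show ?thesis
    unfolding j_def[symmetric] by (meson atLeastAtMost_iff le_trans not_le not_less)
qed

lemma token_less_lo_iff:
  assumes "X \<in> slot_sets" "s \<in> {1..M}" "i \<le> k"
  shows "token X s < lo i \<longleftrightarrow> slot_block X s < i"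
proof -
  define j where "j = slot_block X s"
  have "token X s \<in> {lo j..hi j}" "j \<le> k"
    using token_mem[OF assms(1,2)] slot_block_le[OF assms(1)] j_def by auto
  moreover have "hi j < lo i" if "j < i"
    using block_chain_less[OF chain] that assms(3) by blast
  moreover have "lo i \<le> lo j" if "i \<le> j"
    using block_chain_le[OF chain that \<open>j \<le> k\<close>] by simp
  ultimately show ?thesis
    unfolding j_def[symmetric] by (meson atLeastAtMost_iff le_less_trans not_le not_less)
qed

lemma inj_on_token:
  assumes "X \<in> slot_sets"
  shows "inj_on (token X) {1..M}"
proof (rule inj_onI)
  fix s s' assume s: "s \<in> {1..M}" "s' \<in> {1..M}" and eq: "token X s = token X s'"
  have "slot_block X s = slot_block X s'"
  proof (rule ccontr)
    assume ne: "slot_block X s \<noteq> slot_block X s'"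
    have "hi (slot_block X s) < lo (slot_block X s') \<or> hi (slot_block X s') < lo (slot_block X s)"
      using block_chain_less[OF chain] slot_block_le[OF assms] ne by (meson linorder_neqE_nat)
    then show False
      using token_mem[OF assms s(1)] token_mem[OF assms s(2)] eq by auto
  qed
  then show "s = s'"
    using tokens slot_block_le[OF assms] eq s by (metis inj_onD)
qed

lemma card_placement_Int:
  assumes "X \<in> slot_sets"
  shows "card (placement \<pi> F M X \<inter> T) = card (F \<inter> T) + card {s \<in> {1..M}. token X s \<in> T}"
proof -
  have "placement \<pi> F M X \<inter> T = (F \<inter> T) \<union> token X ` {s \<in> {1..M}. token X s \<in> T}"
    unfolding placement_def by auto
  moreover have "(F \<inter> T) \<inter> token X ` {s \<in> {1..M}. token X s \<in> T} = {}"
    using token_mem[OF assms] by auto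
  moreover have "inj_on (token X) {s \<in> {1..M}. token X s \<in> T}"
    using inj_on_token[OF assms] by (rule inj_on_subset) auto
  moreover have "finite F"
    unfolding F_def by simp
  ultimately show ?thesis
    by (simp add: card_Un_disjoint card_image)
qed

lemma placement_props:
  assumes "X \<in> slot_sets"
  shows "finite (placement \<pi> F M X)" "card (placement \<pi> F M X) = card F + M"
    "placement \<pi> F M X \<subseteq> {1..fst G}"
proof -
  show "finite (placement \<pi> F M X)"
    unfolding placement_def F_def by simp
  show "card (placement \<pi> F M X) = card F + M"
  proof -
    have "{s \<in> {1..M}. token X s \<in> UNIV} = {1..M}"
      by blast
    then show ?thesis
      using card_placement_Int[OF assms, of UNIV] by simp
  qed
  have "token X s \<in> {1..fst G}" if "s \<in> {1..M}" for s
    using token_mem[OF assms that] slot_block_le[OF assms, of s] chain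
    unfolding block_chain_def by fastforce
  then show "placement \<pi> F M X \<subseteq> {1..fst G}"
    unfolding placement_def using F_sub by auto
qed

lemma card_placement_below_block:
  assumes "X \<in> slot_sets" "i \<le> k"
  shows "card (placement \<pi> F M X \<inter> {..<lo i}) =
    card (F \<inter> {..<lo i}) + card {s \<in> {1..M}. slot_block X s < i}"
proof -
  have "{s \<in> {1..M}. token X s \<in> {..<lo i}} = {s \<in> {1..M}. slot_block X s < i}"
    using token_less_lo_iff[OF assms(1) _ assms(2)] by auto
  then show ?thesis
    using card_placement_Int[OF assms(1)] by simp
qed

lemma card_placement_upto_block:
  assumes "X \<in> slot_sets" "i \<le> k"
  shows "card (placement \<pi> F M X \<inter> {..hi i}) =
    card (F \<inter> {..hi i}) + card {s \<in> {1..M}. slot_block X s \<le> i}"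
proof -
  have "{s \<in> {1..M}. token X s \<in> {..hi i}} = {s \<in> {1..M}. slot_block X s \<le> i}"
    using token_le_hi_iff[OF assms(1) _ assms(2)] by auto
  then show ?thesis
    using card_placement_Int[OF assms(1)] by simp
qed

lemma placement_counts_first_difference:
  assumes X: "X \<in> slot_sets" and X': "X' \<in> slot_sets" and c: "c \<in> X" "c \<notin> X'"
    and agree: "\<forall>x<c. x \<in> X \<longleftrightarrow> x \<in> X'"
  defines "i \<equiv> slot_block X c"
  shows "card (placement \<pi> F M X' \<inter> {..<lo i}) = card (placement \<pi> F M X \<inter> {..<lo i})"
    and "card (placement \<pi> F M X \<inter> {..hi i}) < card (placement \<pi> F M X' \<inter> {..hi i})"
proof -
  have finX: "finite X" "finite X'"
    using X X' finite_subset by blast+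
  have i: "i < k" "i \<le> k"
    using slot_block_less_card[OF finX(1) c(1)] X unfolding i_def by simp_all
  show "card (placement \<pi> F M X' \<inter> {..<lo i}) = card (placement \<pi> F M X \<inter> {..<lo i})"
    using card_placement_below_block[OF X i(2)] card_placement_below_block[OF X' i(2)]
      slot_block_less_first_difference[OF finX(2) agree c(1) finX(1)]
    unfolding i_def by simp
  have "Suc c \<le> M"
  proof (rule ccontr)
    assume "\<not> Suc c \<le> M"
    then have "{x \<in> X'. x < Suc c} = X'"
      using X' by auto
    then show False
      using slot_block_Suc_nonmem[OF c(2)] slot_block_cong[OF agree, of c] i X'
      unfolding i_def slot_block_def by simp
  qed
  then have "card {s \<in> {1..M}. slot_block X s \<le> i} < card {s \<in> {1..M}. slot_block X' s \<le> i}"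
    using slot_block_le_first_difference[OF agree c finX(1), of "{1..M}"]
    unfolding i_def by (intro psubset_card_mono) auto
  then show "card (placement \<pi> F M X \<inter> {..hi i}) < card (placement \<pi> F M X' \<inter> {..hi i})"
    using card_placement_upto_block[OF X i(2)] card_placement_upto_block[OF X' i(2)] by simp
qed

text \<open>Let \<open>c\<close> be the first slot where \<open>X\<close> and \<open>X'\<close> differ, \<open>c \<in> X\<close>, and \<open>i\<close> the block of slot
  \<open>c\<close>. Then \<open>placement X'\<close> has more vertices up to \<open>hi i\<close>, so the separator \<open>Suc (hi i)\<close> of
  \<open>placement X\<close> and the vertex of slot \<open>c\<close> have ranks that \<open>placement X'\<close> gives to twins in
  block \<open>i\<close>; but the witness \<open>w i\<close> separates them.\<close>

lemma placement_first_difference: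
  assumes X: "X \<in> slot_sets" and X': "X' \<in> slot_sets" and c: "c \<in> X" "c \<notin> X'"
    and agree: "\<forall>x<c. x \<in> X \<longleftrightarrow> x \<in> X'"
  shows "induced_edges G (placement \<pi> F M X) \<noteq> induced_edges G (placement \<pi> F M X')"
proof
  assume eq: "induced_edges G (placement \<pi> F M X) = induced_edges G (placement \<pi> F M X')"
  define S S' where "S = placement \<pi> F M X" and "S' = placement \<pi> F M X'"
  define i where "i = slot_block X c"
  have i: "i < k"
    using slot_block_less_card[of X c] X c finite_subset[of X "{1..M}"] unfolding i_def by auto
  have fin: "finite S" "finite S'" and card: "card S = card S'"
    unfolding S_def S'_def using placement_props[OF X] placement_props[OF X'] by auto
  note counts = placement_counts_first_difference[OF X X' c agree, folded i_def S_def S'_def]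
  define x y where "x = \<pi> i c" and "y = Suc (hi i)"
  have x: "x \<in> {lo i..hi i} - F" "x \<in> S"
    using token_mem[OF X] c X unfolding x_def i_def S_def placement_def by auto
  have y: "y \<in> S" "w i \<in> S" "w i \<in> F"
    unfolding S_def placement_def F_def y_def using i by auto
  have hom: "homogeneous_interval G (lo i) (hi i)"
    using chain i unfolding block_chain_def by auto
  have wit: "x0 i \<in> {lo i..hi i}" "w i \<noteq> x0 i" "w i \<noteq> y"
    "({x0 i, w i} \<in> snd G) \<noteq> ({y, w i} \<in> snd G)"
    using witness i unfolding y_def by auto
  have "w i \<noteq> x"
    using x(1) y(3) by auto
  then have separated: "({x, w i} \<in> snd G) \<noteq> ({y, w i} \<in> snd G)"
    using homogeneous_interval_outside[OF hom _ wit(1)] x wit(2,4) by auto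
  have "card (S \<inter> {..<lo i}) < rank S x" "rank S x < rank S y"
    "rank S y = Suc (card (S \<inter> {..hi i}))"
    using card_Int_lessThan_less_rank[OF fin(1) x(2)] rank_less[OF fin(1) y(1)]
      rank_Suc[OF fin(1) y(1)[unfolded y_def]] x(1) unfolding y_def by auto
  then have "card (S' \<inter> {..<lo i}) < rank S x" "rank S x \<le> card (S' \<inter> {..hi i})"
    "card (S' \<inter> {..<lo i}) < rank S y" "rank S y \<le> card (S' \<inter> {..hi i})"
    using counts by linarith+
  then have "{x, w i} \<in> snd G \<longleftrightarrow> {y, w i} \<in> snd G"
    by (rule induced_edges_eq_twins[OF eq[folded S_def S'_def] fin card hom x(2) y(1,2)
          \<open>w i \<noteq> x\<close> wit(3)])
  with separated show False
    by simp
qed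

lemma inj_on_placement: "inj_on (\<lambda>X. induced_edges G (placement \<pi> F M X)) slot_sets"
proof (rule inj_onI, rule ccontr)
  fix X X' assume X: "X \<in> slot_sets" and X': "X' \<in> slot_sets"
    and eq: "induced_edges G (placement \<pi> F M X) = induced_edges G (placement \<pi> F M X')"
    and "X \<noteq> X'"
  define D where "D = (X - X') \<union> (X' - X)"
  have D: "finite D" "D \<noteq> {}"
    unfolding D_def using X X' \<open>X \<noteq> X'\<close> finite_subset by auto
  define c where "c = Min D"
  have "c \<in> D"
    unfolding c_def using D by simp
  moreover have "\<forall>x<c. x \<in> X \<longleftrightarrow> x \<in> X'"
    using Min_le[OF D(1)] unfolding c_def D_def by (metis DiffI UnI1 UnI2 not_le)
  ultimately show False
    using placement_first_difference[OF X X'] placement_first_difference[OF X' X] eq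
    unfolding D_def by (metis DiffE UnE)
qed

end

lemma block_chain_witnesses:
  assumes "block_chain G k m lo hi"
  obtains x0 w where "\<forall>j<k. x0 j \<in> {lo j..hi j} \<and> w j \<noteq> x0 j \<and> w j \<noteq> Suc (hi j) \<and>
    ({x0 j, w j} \<in> snd G) \<noteq> ({Suc (hi j), w j} \<in> snd G)"
proof -
  have "\<forall>j. \<exists>x w. j < k \<longrightarrow> x \<in> {lo j..hi j} \<and> w \<noteq> x \<and> w \<noteq> Suc (hi j) \<and>
      ({x, w} \<in> snd G) \<noteq> ({Suc (hi j), w} \<in> snd G)"
    using assms not_homogeneous_Suc_witness unfolding block_chain_def
    by (metis order.strict_implies_order)
  then show ?thesis
    using that by metis
qed

lemma ex_injections_avoiding:
  assumes "finite F" "\<forall>j\<le>k. finite (B j) \<and> M + card F \<le> card (B j)"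
  obtains \<pi> where "\<forall>j\<le>k. inj_on (\<pi> j) {1..M} \<and> \<pi> j ` {1..M} \<subseteq> B j - F"
proof -
  have "\<exists>f. inj_on f {1..M} \<and> f ` {1..M} \<subseteq> B j - F" if "j \<le> k" for j
  proof -
    have "finite (B j)" "M + card F \<le> card (B j)"
      using assms(2) that by simp_all
    then have "card {1..M} \<le> card (B j - F)"
      using diff_card_le_card_Diff[OF assms(1), of "B j"] by simp
    then show ?thesis
      using card_le_inj[of "{1..M}" "B j - F"] \<open>finite (B j)\<close> by auto
  qed
  then have "\<forall>j. \<exists>f. j \<le> k \<longrightarrow> inj_on f {1..M} \<and> f ` {1..M} \<subseteq> B j - F"
    by blast
  then show ?thesis
    using that by metis
qed

lemma card_image_Un_image_le: "finite A \<Longrightarrow> card (f ` A \<union> g ` A) \<le> 2 * card A"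
  using card_Un_le[of "f ` A" "g ` A"] card_image_le[of A f] card_image_le[of A g] by linarith

lemma block_chain_separators_sub:
  assumes og: "ordered_graph G" and chain: "block_chain G k m lo hi"
    and witness: "\<forall>j<k. ({x0 j, w j} \<in> snd G) \<noteq> ({Suc (hi j), w j} \<in> snd G)"
  shows "(\<lambda>j. Suc (hi j)) ` {..<k} \<union> w ` {..<k} \<subseteq> {1..fst G}"
proof -
  have "Suc (hi j) \<in> {1..fst G}" if "j < k" for j
  proof -
    have "hi j < lo (Suc j)" "lo (Suc j) \<le> hi (Suc j)" "hi (Suc j) \<le> fst G"
      using chain that unfolding block_chain_def by auto
    then show ?thesis
      by auto
  qed
  moreover have "w j \<in> {1..fst G}" if "j < k" for j
    using witness ordered_graph_edgeD(3)[OF og] that by metis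
  ultimately show ?thesis
    by auto
qed

lemma card_slice_ge_choose:
  assumes her: "hereditary P" and GP: "G \<in> P" and chain: "block_chain G k (n + 2 * k) lo hi"
  shows "(n - 2 * k) choose k \<le> card (slice P n)"
proof -
  have og: "ordered_graph G"
    using her GP unfolding hereditary_def by blast
  obtain x0 w where witness: "\<forall>j<k. x0 j \<in> {lo j..hi j} \<and> w j \<noteq> x0 j \<and> w j \<noteq> Suc (hi j) \<and>
      ({x0 j, w j} \<in> snd G) \<noteq> ({Suc (hi j), w j} \<in> snd G)"
    by (rule block_chain_witnesses[OF chain])
  define F where "F = (\<lambda>j. Suc (hi j)) ` {..<k} \<union> w ` {..<k}"
  have card_F: "card F \<le> 2 * k"
    unfolding F_def using card_image_Un_image_le[of "{..<k}"] by simp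
  have F_sub: "F \<subseteq> {1..fst G}"
    unfolding F_def using witness by (intro block_chain_separators_sub[OF og chain]) auto
  show ?thesis
  proof (cases "n < card F")
    case True
    then show ?thesis
      using card_F by (cases k) auto
  next
    case False
    define M where "M = n - card F"
    have "\<forall>j\<le>k. finite {lo j..hi j} \<and> M + card F \<le> card {lo j..hi j}"
      using chain False unfolding block_chain_def M_def by auto
    then obtain \<pi> where tokens: "\<forall>j\<le>k. inj_on (\<pi> j) {1..M} \<and> \<pi> j ` {1..M} \<subseteq> {lo j..hi j} - F"
      using ex_injections_avoiding[of F k "\<lambda>j. {lo j..hi j}" M] unfolding F_def by blast
    note placement_data = chain witness F_def F_sub tokens
    let ?XX = "{X. X \<subseteq> {1..M} \<and> card X = k}"
    have "induced_edges G (placement \<pi> F M X) \<in> slice P n" if "X \<in> ?XX" for X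
      using induced_edges_in_slice[OF her GP placement_props(3)[OF placement_data that]]
        placement_props(2)[OF placement_data that] False
      unfolding M_def by simp
    then have "card ?XX \<le> card (slice P n)"
      using card_le_card_slice[OF her inj_on_placement[OF placement_data]] by blast
    moreover have "card ?XX = M choose k"
      using n_subsets[of "{1..M}" k] by simp
    moreover have "n - 2 * k \<le> M"
      using card_F unfolding M_def by simp
    ultimately show ?thesis
      using binomial_right_mono le_trans by metis
  qed
qed


section \<open>The bound \<open>n\<close> from two large blocks\<close>

text \<open>For a first block ending at \<open>h1\<close> and a second one starting at \<open>l2\<close>: the last \<open>a\<close> vertices of
  the first, the first \<open>c\<close> of the second, and extra vertices \<open>L\<close>, \<open>Mid\<close>, \<open>U\<close> to the left of,
  between and to the right of them.\<close>

definition block_sample :: "nat set \<Rightarrow> nat set \<Rightarrow> nat set \<Rightarrow> nat \<Rightarrow> nat \<Rightarrow> nat \<Rightarrow> nat \<Rightarrow> nat set" where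
  "block_sample L Mid U h1 l2 a c = L \<union> {Suc h1 - a..h1} \<union> Mid \<union> {l2..<l2 + c} \<union> U"

lemma card_Un_Int_disjoint:
  assumes "finite A" "finite B" "A \<inter> B = {}"
  shows "card ((A \<union> B) \<inter> T) = card (A \<inter> T) + card (B \<inter> T)"
proof -
  have "(A \<union> B) \<inter> T = (A \<inter> T) \<union> (B \<inter> T)"
    by auto
  then show ?thesis
    using assms by (simp add: card_Un_disjoint disjoint_iff)
qed

lemma card_block_sample_Int:
  assumes fin: "finite L" "finite Mid" "finite U"
    and L: "\<forall>x\<in>L. x < Suc h1 - a" and Mid: "\<forall>x\<in>Mid. h1 < x \<and> x < l2" and U: "\<forall>x\<in>U. l2 + c \<le> x"
    and hl: "h1 < l2"
  shows "card (block_sample L Mid U h1 l2 a c \<inter> T) = card (L \<inter> T) + card ({Suc h1 - a..h1} \<inter> T) +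
    card (Mid \<inter> T) + card ({l2..<l2 + c} \<inter> T) + card (U \<inter> T)"
proof -
  let ?A = "{Suc h1 - a..h1}" and ?C = "{l2..<l2 + c}"
  have d1: "L \<inter> ?A = {}" using L by auto
  have d2: "(L \<union> ?A) \<inter> Mid = {}" using L Mid by fastforce
  have d3: "(L \<union> ?A \<union> Mid) \<inter> ?C = {}" using L Mid hl by fastforce
  have d4: "(L \<union> ?A \<union> Mid \<union> ?C) \<inter> U = {}" using L Mid U hl by fastforce
  have "card (block_sample L Mid U h1 l2 a c \<inter> T) = card ((L \<union> ?A \<union> Mid \<union> ?C) \<inter> T) + card (U \<inter> T)"
    unfolding block_sample_def using fin d4 by (intro card_Un_Int_disjoint) auto
  also have "card ((L \<union> ?A \<union> Mid \<union> ?C) \<inter> T) = card ((L \<union> ?A \<union> Mid) \<inter> T) + card (?C \<inter> T)"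
    using fin d3 by (intro card_Un_Int_disjoint) auto
  also have "card ((L \<union> ?A \<union> Mid) \<inter> T) = card ((L \<union> ?A) \<inter> T) + card (Mid \<inter> T)"
    using fin d2 by (intro card_Un_Int_disjoint) auto
  also have "card ((L \<union> ?A) \<inter> T) = card (L \<inter> T) + card (?A \<inter> T)"
    using fin d1 by (intro card_Un_Int_disjoint) auto
  finally show ?thesis
    by simp
qed

lemma block_sample_ranks:
  assumes fin: "finite L" "finite Mid" "finite U"
    and L: "\<forall>x\<in>L. x < Suc h1 - a" and Mid: "\<forall>x\<in>Mid. h1 < x \<and> x < l2" and U: "\<forall>x\<in>U. l2 + c \<le> x"
    and hl: "h1 < l2" and ah: "a \<le> h1"
  shows "card (block_sample L Mid U h1 l2 a c) = card L + a + card Mid + c + card U"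
    and "y \<in> L \<Longrightarrow> rank (block_sample L Mid U h1 l2 a c) y = card (L \<inter> {..y})"
    and "y \<in> {Suc h1 - a..h1} \<Longrightarrow> rank (block_sample L Mid U h1 l2 a c) y = card L + (y + a - h1)"
    and "y \<in> Mid \<Longrightarrow> rank (block_sample L Mid U h1 l2 a c) y = card L + a + card (Mid \<inter> {..y})"
    and "y \<in> {l2..<l2 + c} \<Longrightarrow>
      rank (block_sample L Mid U h1 l2 a c) y = card L + a + card Mid + (Suc y - l2)"
    and "y \<in> U \<Longrightarrow>
      rank (block_sample L Mid U h1 l2 a c) y = card L + a + card Mid + c + card (U \<inter> {..y})"
    and "finite (block_sample L Mid U h1 l2 a c)"
proof -
  note card_Int = card_block_sample_Int[OF fin L Mid U hl]
  show "card (block_sample L Mid U h1 l2 a c) = card L + a + card Mid + c + card U"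
    using card_Int[of UNIV] ah by simp
  show "finite (block_sample L Mid U h1 l2 a c)"
    unfolding block_sample_def using fin by simp
  assume y: "y \<in> L"
  have "{Suc h1 - a..h1} \<inter> {..y} = {}" "Mid \<inter> {..y} = {}" "{l2..<l2 + c} \<inter> {..y} = {}"
    "U \<inter> {..y} = {}"
    using y L Mid U hl by fastforce+
  then show "rank (block_sample L Mid U h1 l2 a c) y = card (L \<inter> {..y})"
    unfolding rank_def using card_Int[of "{..y}"] by simp
next
  note card_Int = card_block_sample_Int[OF fin L Mid U hl]
  assume y: "y \<in> {Suc h1 - a..h1}"
  have "L \<inter> {..y} = L" "Mid \<inter> {..y} = {}" "{l2..<l2 + c} \<inter> {..y} = {}" "U \<inter> {..y} = {}"
    using y L Mid U hl by fastforce+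
  moreover have "{Suc h1 - a..h1} \<inter> {..y} = {Suc h1 - a..y}" "card {Suc h1 - a..y} = y + a - h1"
    "min h1 y = y"
    using y ah by auto
  ultimately show "rank (block_sample L Mid U h1 l2 a c) y = card L + (y + a - h1)"
    unfolding rank_def using card_Int[of "{..y}"] by simp
next
  note card_Int = card_block_sample_Int[OF fin L Mid U hl]
  assume y: "y \<in> Mid"
  have "L \<inter> {..y} = L" "{Suc h1 - a..h1} \<inter> {..y} = {Suc h1 - a..h1}" "{l2..<l2 + c} \<inter> {..y} = {}"
    "U \<inter> {..y} = {}" "min h1 y = h1"
    using y L Mid U hl by fastforce+
  then show "rank (block_sample L Mid U h1 l2 a c) y = card L + a + card (Mid \<inter> {..y})"
    unfolding rank_def using card_Int[of "{..y}"] ah by simp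
next
  note card_Int = card_block_sample_Int[OF fin L Mid U hl]
  assume y: "y \<in> {l2..<l2 + c}"
  have "L \<inter> {..y} = L" "{Suc h1 - a..h1} \<inter> {..y} = {Suc h1 - a..h1}" "Mid \<inter> {..y} = Mid"
    "U \<inter> {..y} = {}"
    using y L Mid U hl by fastforce+
  moreover have "{l2..<l2 + c} \<inter> {..y} = {l2..y}" "min h1 y = h1" "min (l2 + c - 1) y = y"
    using y hl by auto
  ultimately show "rank (block_sample L Mid U h1 l2 a c) y = card L + a + card Mid + (Suc y - l2)"
    unfolding rank_def using card_Int[of "{..y}"] ah by simp
next
  note card_Int = card_block_sample_Int[OF fin L Mid U hl]
  assume y: "y \<in> U"
  have "L \<inter> {..y} = L" "{Suc h1 - a..h1} \<inter> {..y} = {Suc h1 - a..h1}" "Mid \<inter> {..y} = Mid"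
    "{l2..<l2 + c} \<inter> {..y} = {l2..<l2 + c}" "min h1 y = h1"
    using y L Mid U hl by fastforce+
  then show "rank (block_sample L Mid U h1 l2 a c) y = card L + a + card Mid + c + card (U \<inter> {..y})"
    unfolding rank_def using card_Int[of "{..y}"] ah by simp
qed

locale two_blocks =
  fixes P :: "ograph set" and G :: ograph and n l1 h1 l2 h2 :: nat
  assumes her: "hereditary P" and GP: "G \<in> P"
    and first: "1 \<le> l1" "homogeneous_interval G l1 h1" "n < card {l1..h1}"
    and second: "h1 < l2" "h2 \<le> fst G" "homogeneous_interval G l2 h2" "n < card {l2..h2}"
    and not_extendable: "\<not> homogeneous_interval G l1 (Suc h1)"
begin

lemma ordered_graph: "ordered_graph G"
  using her GP unfolding hereditary_def by blast

lemma block_sizes: "n \<le> h1" "l1 + n \<le> h1" "l2 + n \<le> h2"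
  using first second by auto

abbreviation sample :: "nat set \<Rightarrow> nat set \<Rightarrow> nat set \<Rightarrow> nat \<Rightarrow> nat \<Rightarrow> nat set" where
  "sample L Mid U a c \<equiv> block_sample L Mid U h1 l2 a c"

definition admissible :: "nat set \<Rightarrow> nat set \<Rightarrow> nat set \<Rightarrow> bool" where
  "admissible L Mid U \<longleftrightarrow> L \<subseteq> {1..<l1} \<and> Mid \<subseteq> {h1<..<l2} \<and> U \<subseteq> {h2<..fst G}"

lemma sample_ranks:
  assumes "admissible L Mid U" "a \<le> n" "c \<le> n"
  shows "card (sample L Mid U a c) = card L + a + card Mid + c + card U"
    and "y \<in> L \<Longrightarrow> rank (sample L Mid U a c) y = card (L \<inter> {..y})"
    and "y \<in> {Suc h1 - a..h1} \<Longrightarrow> rank (sample L Mid U a c) y = card L + (y + a - h1)"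
    and "y \<in> Mid \<Longrightarrow> rank (sample L Mid U a c) y = card L + a + card (Mid \<inter> {..y})"
    and "y \<in> {l2..<l2 + c} \<Longrightarrow> rank (sample L Mid U a c) y = card L + a + card Mid + (Suc y - l2)"
    and "y \<in> U \<Longrightarrow> rank (sample L Mid U a c) y = card L + a + card Mid + c + card (U \<inter> {..y})"
    and "finite (sample L Mid U a c)"
proof -
  have fin: "finite L" "finite Mid" "finite U"
    using assms(1) unfolding admissible_def by (auto intro: finite_subset)
  have L: "\<forall>x\<in>L. x < Suc h1 - a" and Mid: "\<forall>x\<in>Mid. h1 < x \<and> x < l2" and U: "\<forall>x\<in>U. l2 + c \<le> x"
    using assms block_sizes unfolding admissible_def by fastforce+
  have "a \<le> h1"
    using assms(2) block_sizes by simp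
  note R = block_sample_ranks[OF fin L Mid U second(1) this]
  show "card (sample L Mid U a c) = card L + a + card Mid + c + card U" by (fact R(1))
  show "y \<in> L \<Longrightarrow> rank (sample L Mid U a c) y = card (L \<inter> {..y})" by (fact R(2))
  show "y \<in> {Suc h1 - a..h1} \<Longrightarrow> rank (sample L Mid U a c) y = card L + (y + a - h1)" by (fact R(3))
  show "y \<in> Mid \<Longrightarrow> rank (sample L Mid U a c) y = card L + a + card (Mid \<inter> {..y})" by (fact R(4))
  show "y \<in> {l2..<l2 + c} \<Longrightarrow> rank (sample L Mid U a c) y = card L + a + card Mid + (Suc y - l2)"
    by (fact R(5))
  show "y \<in> U \<Longrightarrow> rank (sample L Mid U a c) y = card L + a + card Mid + c + card (U \<inter> {..y})"
    by (fact R(6))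
  show "finite (sample L Mid U a c)" by (fact R(7))
qed

lemma mem_sample:
  shows "y \<in> L \<Longrightarrow> y \<in> sample L Mid U a c" and "y \<in> {Suc h1 - a..h1} \<Longrightarrow> y \<in> sample L Mid U a c"
    and "y \<in> Mid \<Longrightarrow> y \<in> sample L Mid U a c" and "y \<in> {l2..<l2 + c} \<Longrightarrow> y \<in> sample L Mid U a c"
    and "y \<in> U \<Longrightarrow> y \<in> sample L Mid U a c"
  unfolding block_sample_def by blast+

lemma sample_parts_in_blocks:
  shows "y \<in> {Suc h1 - a..h1} \<Longrightarrow> a \<le> n \<Longrightarrow> y \<in> {l1..h1}"
    and "y \<in> {l2..<l2 + c} \<Longrightarrow> c \<le> n \<Longrightarrow> y \<in> {l2..h2}"
  using block_sizes by auto

lemma sample_in_blocks: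
  assumes "u \<in> sample L Mid U a c" "u \<notin> L" "u \<notin> Mid" "u \<notin> U" "a \<le> n" "c \<le> n"
  shows "u \<in> {l1..h1} \<union> {l2..h2}"
  using assms sample_parts_in_blocks unfolding block_sample_def by blast

lemma sample_in_slice:
  assumes adm: "admissible L Mid U" and "a \<le> n" "c \<le> n"
    and "card L + a + card Mid + c + card U = n"
  shows "induced_edges G (sample L Mid U a c) \<in> slice P n"
proof -
  have "{Suc h1 - a..h1} \<subseteq> {1..fst G}" "{l2..<l2 + c} \<subseteq> {1..fst G}"
    using first second assms(2,3) block_sizes by auto
  moreover have "L \<union> Mid \<union> U \<subseteq> {1..fst G}"
  proof
    fix x assume "x \<in> L \<union> Mid \<union> U"
    then consider "x \<in> {1..<l1}" | "x \<in> {h1<..<l2}" | "x \<in> {h2<..fst G}"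
      using adm unfolding admissible_def by blast
    then show "x \<in> {1..fst G}"
      using first second block_sizes by cases auto
  qed
  ultimately have "sample L Mid U a c \<subseteq> {1..fst G}"
    unfolding block_sample_def by blast
  then show ?thesis
    using induced_edges_in_slice[OF her GP] sample_ranks(1)[OF adm assms(2,3)] assms(4) by metis
qed

lemma card_slice_ge_samples:
  assumes "admissible L Mid U"
    and "\<And>a. a \<in> I \<Longrightarrow> a \<le> n \<and> c a \<le> n \<and> card L + a + card Mid + c a + card U = n"
    and "inj_on (\<lambda>a. induced_edges G (sample L Mid U a (c a))) I"
  shows "card I \<le> card (slice P n)"
  using card_le_card_slice[OF her assms(3)] sample_in_slice[OF assms(1)] assms(2) by blast

lemma ex_sample_vertex_of_rank:
  assumes "admissible L Mid U" "a \<le> n" "c \<le> n" "card L + a + card Mid + c + card U = n"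
    and "1 \<le> p" "p \<le> n"
  obtains u where "u \<in> sample L Mid U a c" "rank (sample L Mid U a c) u = p"
  using ex_rank_eq[OF sample_ranks(7)[OF assms(1-3)]] sample_ranks(1)[OF assms(1-3)] assms(4-6)
  by metis

lemma ex_block_vertex_of_rank:
  assumes adm: "admissible L Mid U" and "a \<le> n" "c \<le> n"
    and "card L + a + card Mid + c + card U = n" and "1 \<le> p" "p \<le> n"
    and "\<forall>u \<in> L \<union> Mid \<union> U. rank (sample L Mid U a c) u \<noteq> p"
  obtains u where "u \<in> sample L Mid U a c" "rank (sample L Mid U a c) u = p"
    "u \<in> {l1..h1} \<union> {l2..h2}"
proof -
  obtain u where u: "u \<in> sample L Mid U a c" "rank (sample L Mid U a c) u = p"
    using ex_sample_vertex_of_rank[OF assms(1-6)] by blast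
  then have "u \<in> {l1..h1} \<union> {l2..h2}"
    using sample_in_blocks[OF u(1) _ _ _ assms(2,3)] assms(7) by blast
  with u that show ?thesis
    by blast
qed

lemma edge_inside_first:
  "x \<in> {l1..h1} \<Longrightarrow> y \<in> {l1..h1} \<Longrightarrow> x \<noteq> y \<Longrightarrow> {x, y} \<in> snd G \<longleftrightarrow> {l1, h1} \<in> snd G"
  using homogeneous_interval_pairs[OF first(2), of x y l1 h1] block_sizes by auto

lemma edge_inside_second:
  "x \<in> {l2..h2} \<Longrightarrow> y \<in> {l2..h2} \<Longrightarrow> x \<noteq> y \<Longrightarrow> {x, y} \<in> snd G \<longleftrightarrow> {l2, h2} \<in> snd G"
  using homogeneous_interval_pairs[OF second(3), of x y l2 h2] block_sizes by auto

lemma edge_outside_first: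
  "x \<in> {l1..h1} \<Longrightarrow> z \<notin> {l1..h1} \<Longrightarrow> {z, x} \<in> snd G \<longleftrightarrow> {z, h1} \<in> snd G"
  using homogeneous_interval_outside[OF first(2), of x h1 z] block_sizes
  by (auto simp: insert_commute)

lemma edge_outside_second:
  "x \<in> {l2..h2} \<Longrightarrow> z \<notin> {l2..h2} \<Longrightarrow> {z, x} \<in> snd G \<longleftrightarrow> {z, l2} \<in> snd G"
  using homogeneous_interval_outside[OF second(3), of x l2 z] block_sizes
  by (auto simp: insert_commute)

lemma edge_across:
  assumes "x \<in> {l1..h1}" "y \<in> {l2..h2}"
  shows "{x, y} \<in> snd G \<longleftrightarrow> {h1, l2} \<in> snd G"
proof -
  have "y \<notin> {l1..h1}" "h1 \<notin> {l2..h2}"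
    using assms second(1) by auto
  then show ?thesis
    using edge_outside_first[OF assms(1)] edge_outside_second[OF assms(2)] by (metis insert_commute)
qed

lemma card_slice_ge_if_first_ne_across:
  assumes ne: "({l1, h1} \<in> snd G) \<noteq> ({h1, l2} \<in> snd G)"
  shows "n \<le> card (slice P n)"
proof -
  have adm: "admissible {} {} {}"
    unfolding admissible_def by simp
  have "inj_on (\<lambda>a. induced_edges G (sample {} {} {} a (n - a))) {1..n}"
  proof (rule linorder_inj_onI')
    fix a a' assume a: "a \<in> {1..n}" "a' \<in> {1..n}" "a < a'"
    have le_n: "a \<le> n" "n - a \<le> n" "a' \<le> n" "n - a' \<le> n"
      using a by auto
    note R = sample_ranks[OF adm le_n(1,2)] and R' = sample_ranks[OF adm le_n(3,4)]
    define x y x' y' where "x = Suc h1 - a" "y = l2" "x' = Suc h1 - a'" "y' = Suc h1 - a' + a"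
    have mem: "x \<in> {Suc h1 - a..h1}" "y \<in> {l2..<l2 + (n - a)}" "x' \<in> {Suc h1 - a'..h1}"
      "y' \<in> {Suc h1 - a'..h1}"
      using a block_sizes unfolding x_y_x'_y'_def by auto
    have "{x, y} \<in> snd G \<longleftrightarrow> {h1, l2} \<in> snd G"
      using edge_across[OF sample_parts_in_blocks(1)[OF mem(1) le_n(1)]
          sample_parts_in_blocks(2)[OF mem(2) le_n(2)]] .
    moreover have "{x', y'} \<in> snd G \<longleftrightarrow> {l1, h1} \<in> snd G"
      using edge_inside_first[OF sample_parts_in_blocks(1)[OF mem(3) le_n(3)]
          sample_parts_in_blocks(1)[OF mem(4) le_n(3)]] a unfolding x_y_x'_y'_def by simp
    ultimately have "({x, y} \<in> snd G) \<noteq> ({x', y'} \<in> snd G)"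
      using ne by simp
    moreover have "rank (sample {} {} {} a (n - a)) x = rank (sample {} {} {} a' (n - a')) x'"
      "rank (sample {} {} {} a (n - a)) y = rank (sample {} {} {} a' (n - a')) y'"
      using R(3)[OF mem(1)] R(5)[OF mem(2)] R'(3)[OF mem(3)] R'(3)[OF mem(4)] a block_sizes
      unfolding x_y_x'_y'_def by auto
    ultimately show "induced_edges G (sample {} {} {} a (n - a)) \<noteq>
        induced_edges G (sample {} {} {} a' (n - a'))"
      by (intro induced_edges_neq[OF R(7) R'(7) mem_sample(2)[OF mem(1)] mem_sample(4)[OF mem(2)]
          mem_sample(2)[OF mem(3)] mem_sample(2)[OF mem(4)]])
  qed
  then show ?thesis
    using card_slice_ge_samples[OF adm, of "{1..n}" "\<lambda>a. n - a"] by simp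
qed


lemma card_slice_ge_if_second_ne_across:
  assumes ne: "({l2, h2} \<in> snd G) \<noteq> ({h1, l2} \<in> snd G)"
  shows "n \<le> card (slice P n)"
proof -
  have adm: "admissible {} {} {}"
    unfolding admissible_def by simp
  have "inj_on (\<lambda>a. induced_edges G (sample {} {} {} a (n - a))) {0..<n}"
  proof (rule linorder_inj_onI')
    fix a a' assume a: "a \<in> {0..<n}" "a' \<in> {0..<n}" "a < a'"
    have le_n: "a \<le> n" "n - a \<le> n" "a' \<le> n" "n - a' \<le> n"
      using a by auto
    note R = sample_ranks[OF adm le_n(1,2)] and R' = sample_ranks[OF adm le_n(3,4)]
    define x y x' y' where "x = l2 + (a' - Suc a)" "y = l2 + (n - Suc a)" "x' = h1"
      "y' = l2 + (n - Suc a')"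
    have mem: "x \<in> {l2..<l2 + (n - a)}" "y \<in> {l2..<l2 + (n - a)}" "x' \<in> {Suc h1 - a'..h1}"
      "y' \<in> {l2..<l2 + (n - a')}"
      using a unfolding x_y_x'_y'_def by auto
    have "{x, y} \<in> snd G \<longleftrightarrow> {l2, h2} \<in> snd G"
      using edge_inside_second[OF sample_parts_in_blocks(2)[OF mem(1) le_n(2)]
          sample_parts_in_blocks(2)[OF mem(2) le_n(2)]] a unfolding x_y_x'_y'_def by simp
    moreover have "{x', y'} \<in> snd G \<longleftrightarrow> {h1, l2} \<in> snd G"
      using edge_across[OF sample_parts_in_blocks(1)[OF mem(3) le_n(3)]
          sample_parts_in_blocks(2)[OF mem(4) le_n(4)]] unfolding x_y_x'_y'_def .
    ultimately have "({x, y} \<in> snd G) \<noteq> ({x', y'} \<in> snd G)"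
      using ne by simp
    moreover have "rank (sample {} {} {} a (n - a)) x = rank (sample {} {} {} a' (n - a')) x'"
      "rank (sample {} {} {} a (n - a)) y = rank (sample {} {} {} a' (n - a')) y'"
      using R(5)[OF mem(1)] R(5)[OF mem(2)] R'(3)[OF mem(3)] R'(5)[OF mem(4)] a
      unfolding x_y_x'_y'_def by auto
    ultimately show "induced_edges G (sample {} {} {} a (n - a)) \<noteq>
        induced_edges G (sample {} {} {} a' (n - a'))"
      by (intro induced_edges_neq[OF R(7) R'(7) mem_sample(4)[OF mem(1)] mem_sample(4)[OF mem(2)]
          mem_sample(2)[OF mem(3)] mem_sample(4)[OF mem(4)]])
  qed
  then show ?thesis
    using card_slice_ge_samples[OF adm, of "{0..<n}" "\<lambda>a. n - a"] by simp
qed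

text \<open>A vertex \<open>z\<close> outside the blocks that treats them differently: in each sample its pairs with the
  two parts have different status, so the rank where the parts meet can be read off.\<close>

lemma card_slice_ge_if_separated_left:
  assumes z: "z < l1" "1 \<le> z" and ne: "({z, h1} \<in> snd G) \<noteq> ({z, l2} \<in> snd G)"
  shows "n \<le> card (slice P n)"
proof -
  have adm: "admissible {z} {} {}"
    unfolding admissible_def using z by auto
  have "inj_on (\<lambda>a. induced_edges G (sample {z} {} {} a (n - Suc a))) {0..<n}"
  proof (rule linorder_inj_onI')
    fix a a' assume a: "a \<in> {0..<n}" "a' \<in> {0..<n}" "a < a'"
    have le_n: "a \<le> n" "n - Suc a \<le> n" "a' \<le> n" "n - Suc a' \<le> n"
      using a by auto
    note R = sample_ranks[OF adm le_n(1,2)] and R' = sample_ranks[OF adm le_n(3,4)]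
    define x' where "x' = Suc h1 - a' + a"
    have mem: "l2 \<in> {l2..<l2 + (n - Suc a)}" "x' \<in> {Suc h1 - a'..h1}" "z \<in> {z}"
      using a block_sizes unfolding x'_def by auto
    have "{z, x'} \<in> snd G \<longleftrightarrow> {z, h1} \<in> snd G"
      using edge_outside_first[OF sample_parts_in_blocks(1)[OF mem(2) le_n(3)]] z by simp
    then have "({z, l2} \<in> snd G) \<noteq> ({z, x'} \<in> snd G)"
      using ne by simp
    moreover have
      "rank (sample {z} {} {} a (n - Suc a)) z = rank (sample {z} {} {} a' (n - Suc a')) z"
      "rank (sample {z} {} {} a (n - Suc a)) l2 = rank (sample {z} {} {} a' (n - Suc a')) x'"
      using R(2)[OF mem(3)] R(5)[OF mem(1)] R'(2)[OF mem(3)] R'(3)[OF mem(2)] a block_sizes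
      unfolding x'_def by auto
    ultimately show "induced_edges G (sample {z} {} {} a (n - Suc a)) \<noteq>
        induced_edges G (sample {z} {} {} a' (n - Suc a'))"
      by (intro induced_edges_neq[OF R(7) R'(7) mem_sample(1)[OF mem(3)] mem_sample(4)[OF mem(1)]
          mem_sample(1)[OF mem(3)] mem_sample(2)[OF mem(2)]])
  qed
  then show ?thesis
    using card_slice_ge_samples[OF adm, of "{0..<n}" "\<lambda>a. n - Suc a"] by simp
qed

lemma card_slice_ge_if_separated_middle:
  assumes z: "h1 < z" "z < l2" and ne: "({z, h1} \<in> snd G) \<noteq> ({z, l2} \<in> snd G)"
  shows "n \<le> card (slice P n)"
proof -
  have adm: "admissible {} {z} {}"
    unfolding admissible_def using z by auto
  have "inj_on (\<lambda>a. induced_edges G (sample {} {z} {} a (n - Suc a))) {0..<n}"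
  proof (rule linorder_inj_onI')
    fix a a' assume a: "a \<in> {0..<n}" "a' \<in> {0..<n}" "a < a'"
    have le_n: "a \<le> n" "n - Suc a \<le> n" "a' \<le> n" "n - Suc a' \<le> n"
      using a by auto
    note R = sample_ranks[OF adm le_n(1,2)] and R' = sample_ranks[OF adm le_n(3,4)]
    define x' y where "x' = Suc h1 - a' + a" "y = l2 + (a' - Suc a)"
    have mem: "y \<in> {l2..<l2 + (n - Suc a)}" "x' \<in> {Suc h1 - a'..h1}" "z \<in> {z}"
      using a block_sizes unfolding x'_y_def by auto
    have "{z, y} \<in> snd G \<longleftrightarrow> {z, l2} \<in> snd G"
      using edge_outside_second[OF sample_parts_in_blocks(2)[OF mem(1) le_n(2)]] z by simp
    moreover have "{z, x'} \<in> snd G \<longleftrightarrow> {z, h1} \<in> snd G"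
      using edge_outside_first[OF sample_parts_in_blocks(1)[OF mem(2) le_n(3)]] z by simp
    ultimately have "({z, y} \<in> snd G) \<noteq> ({x', z} \<in> snd G)"
      using ne by (simp add: insert_commute)
    moreover have
      "rank (sample {} {z} {} a (n - Suc a)) z = rank (sample {} {z} {} a' (n - Suc a')) x'"
      "rank (sample {} {z} {} a (n - Suc a)) y = rank (sample {} {z} {} a' (n - Suc a')) z"
      using R(4)[OF mem(3)] R(5)[OF mem(1)] R'(3)[OF mem(2)] R'(4)[OF mem(3)] a block_sizes
      unfolding x'_y_def by auto
    ultimately show "induced_edges G (sample {} {z} {} a (n - Suc a)) \<noteq>
        induced_edges G (sample {} {z} {} a' (n - Suc a'))"
      by (intro induced_edges_neq[OF R(7) R'(7) mem_sample(3)[OF mem(3)] mem_sample(4)[OF mem(1)]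
          mem_sample(2)[OF mem(2)] mem_sample(3)[OF mem(3)]])
  qed
  then show ?thesis
    using card_slice_ge_samples[OF adm, of "{0..<n}" "\<lambda>a. n - Suc a"] by simp
qed

lemma card_slice_ge_if_separated_right:
  assumes z: "h2 < z" "z \<le> fst G" and ne: "({z, h1} \<in> snd G) \<noteq> ({z, l2} \<in> snd G)"
  shows "n \<le> card (slice P n)"
proof -
  have adm: "admissible {} {} {z}"
    unfolding admissible_def using z by auto
  have "inj_on (\<lambda>a. induced_edges G (sample {} {} {z} a (n - Suc a))) {0..<n}"
  proof (rule linorder_inj_onI')
    fix a a' assume a: "a \<in> {0..<n}" "a' \<in> {0..<n}" "a < a'"
    have le_n: "a \<le> n" "n - Suc a \<le> n" "a' \<le> n" "n - Suc a' \<le> n"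
      using a by auto
    note R = sample_ranks[OF adm le_n(1,2)] and R' = sample_ranks[OF adm le_n(3,4)]
    define x' where "x' = Suc h1 - a' + a"
    have mem: "l2 \<in> {l2..<l2 + (n - Suc a)}" "x' \<in> {Suc h1 - a'..h1}" "z \<in> {z}"
      using a block_sizes unfolding x'_def by auto
    have "{z, x'} \<in> snd G \<longleftrightarrow> {z, h1} \<in> snd G"
      using edge_outside_first[OF sample_parts_in_blocks(1)[OF mem(2) le_n(3)]] z block_sizes
        second(1) by simp
    then have "({l2, z} \<in> snd G) \<noteq> ({x', z} \<in> snd G)"
      using ne by (simp add: insert_commute)
    moreover have
      "rank (sample {} {} {z} a (n - Suc a)) l2 = rank (sample {} {} {z} a' (n - Suc a')) x'"
      "rank (sample {} {} {z} a (n - Suc a)) z = rank (sample {} {} {z} a' (n - Suc a')) z"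
      using R(5)[OF mem(1)] R(6)[OF mem(3)] R'(3)[OF mem(2)] R'(6)[OF mem(3)] a block_sizes
      unfolding x'_def by auto
    ultimately show "induced_edges G (sample {} {} {z} a (n - Suc a)) \<noteq>
        induced_edges G (sample {} {} {z} a' (n - Suc a'))"
      by (intro induced_edges_neq[OF R(7) R'(7) mem_sample(4)[OF mem(1)] mem_sample(5)[OF mem(3)]
          mem_sample(2)[OF mem(2)] mem_sample(5)[OF mem(3)]])
  qed
  then show ?thesis
    using card_slice_ge_samples[OF adm, of "{0..<n}" "\<lambda>a. n - Suc a"] by simp
qed

lemma card_slice_ge_if_separated:
  assumes "z \<in> {1..fst G}" "z \<notin> {l1..h1}" "z \<notin> {l2..h2}"
    and "({z, h1} \<in> snd G) \<noteq> ({z, l2} \<in> snd G)"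
  shows "n \<le> card (slice P n)"
proof -
  consider "z < l1" | "h1 < z" "z < l2" | "h2 < z"
    using assms(1-3) by fastforce
  then show ?thesis
    using card_slice_ge_if_separated_left card_slice_ge_if_separated_middle
      card_slice_ge_if_separated_right assms by cases auto
qed


abbreviation first_block_sample :: "nat set" where
  "first_block_sample \<equiv> sample {} {} {} n 0"

lemma first_block_sample_facts:
  shows "induced_edges G first_block_sample \<in> slice P n" and "finite first_block_sample"
    and "first_block_sample \<subseteq> {l1..h1}"
proof -
  have adm: "admissible {} {} {}"
    unfolding admissible_def by simp
  show "induced_edges G first_block_sample \<in> slice P n"
    using sample_in_slice[OF adm] by simp
  show "finite first_block_sample"
    using sample_ranks(7)[OF adm] by simp
  show "first_block_sample \<subseteq> {l1..h1}"
    using sample_parts_in_blocks(1)[of _ n] unfolding block_sample_def by auto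
qed

lemma ex_first_block_pair_of_ranks:
  assumes "1 \<le> p" "p \<le> n" "1 \<le> q" "q \<le> n" "p \<noteq> q"
  obtains k k' where "k \<in> first_block_sample" "k' \<in> first_block_sample"
    "rank first_block_sample k = p" "rank first_block_sample k' = q"
    "{k, k'} \<in> snd G \<longleftrightarrow> {l1, h1} \<in> snd G"
proof -
  have adm: "admissible {} {} {}"
    unfolding admissible_def by simp
  have c: "n \<le> n" "0 \<le> n" "card {} + n + card {} + 0 + card {} = n"
    by simp_all
  obtain k where k: "k \<in> first_block_sample" "rank first_block_sample k = p"
    using ex_sample_vertex_of_rank[OF adm c assms(1,2)] by blast
  obtain k' where k': "k' \<in> first_block_sample" "rank first_block_sample k' = q"
    using ex_sample_vertex_of_rank[OF adm c assms(3,4)] by blast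
  have "k \<noteq> k'"
    using k k' assms(5) by auto
  moreover have "k \<in> {l1..h1}" "k' \<in> {l1..h1}"
    using first_block_sample_facts(3) k(1) k'(1) by auto
  ultimately have "{k, k'} \<in> snd G \<longleftrightarrow> {l1, h1} \<in> snd G"
    using edge_inside_first by blast
  then show ?thesis
    by (rule that[OF k(1) k'(1) k(2) k'(2)])
qed

lemma card_slice_ge_with_first_block_sample:
  assumes adm: "admissible L Mid U" and "1 \<le> n"
    and card: "\<And>a. a < n - 1 \<Longrightarrow> card L + a + card Mid + (n - Suc (Suc a)) + card U = n"
    and inj: "inj_on (\<lambda>a. induced_edges G (sample L Mid U a (n - Suc (Suc a)))) {0..<n - 1}"
    and ne: "\<And>a. a < n - 1 \<Longrightarrow>
      induced_edges G (sample L Mid U a (n - Suc (Suc a))) \<noteq> induced_edges G first_block_sample"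
  shows "n \<le> card (slice P n)"
proof -
  let ?f = "\<lambda>a. induced_edges G (sample L Mid U a (n - Suc (Suc a)))"
  have "?f a \<in> slice P n" if "a < n - 1" for a
    using sample_in_slice[OF adm _ _ card[OF that]] that by simp
  then have "?f ` {0..<n - 1} \<subseteq> slice P n"
    by auto
  moreover have "induced_edges G first_block_sample \<notin> ?f ` {0..<n - 1}"
    using ne by (metis (no_types, lifting) atLeastLessThan_iff imageE)
  ultimately have "Suc (card {0..<n - 1}) \<le> card (slice P n)"
    by (rule Suc_card_le_card_slice[OF her finite_atLeastLessThan inj _
          first_block_sample_facts(1)])
  then show ?thesis
    using \<open>1 \<le> n\<close> by simp
qed

text \<open>Both blocks together form a module of the graph, all of whose pairs have the same status.\<close>

definition uniform_module :: bool where
  "uniform_module \<longleftrightarrow>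
     ({l1, h1} \<in> snd G \<longleftrightarrow> {h1, l2} \<in> snd G) \<and> ({l2, h2} \<in> snd G \<longleftrightarrow> {h1, l2} \<in> snd G) \<and>
     (\<forall>z\<in>{1..fst G}. z \<notin> {l1..h1} \<longrightarrow> z \<notin> {l2..h2} \<longrightarrow> ({z, h1} \<in> snd G \<longleftrightarrow> {z, l2} \<in> snd G))"

lemma module_edge_inside:
  assumes "uniform_module" "u \<in> {l1..h1} \<union> {l2..h2}" "u' \<in> {l1..h1} \<union> {l2..h2}" "u \<noteq> u'"
  shows "{u, u'} \<in> snd G \<longleftrightarrow> {l1, h1} \<in> snd G"
  using assms edge_inside_first edge_inside_second edge_across[of u u'] edge_across[of u' u]
  unfolding uniform_module_def by (auto simp: insert_commute)

lemma module_edge_outside: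
  assumes "uniform_module" "z \<in> {1..fst G}" "z \<notin> {l1..h1} \<union> {l2..h2}" "u \<in> {l1..h1} \<union> {l2..h2}"
  shows "{z, u} \<in> snd G \<longleftrightarrow> {z, h1} \<in> snd G"
  using assms edge_outside_first[of u z] edge_outside_second[of u z] unfolding uniform_module_def
  by auto

lemma module_gap:
  assumes module: "uniform_module"
  shows "Suc h1 < l2"
proof (rule ccontr)
  assume "\<not> Suc h1 < l2"
  then have in_blocks: "Suc h1 \<in> {l1..h1} \<union> {l2..h2}"
    using second(1) block_sizes by auto
  obtain x w where w: "x \<in> {l1..h1}" "w \<noteq> x" "w \<noteq> Suc h1"
    "({x, w} \<in> snd G) \<noteq> ({Suc h1, w} \<in> snd G)"
    using not_homogeneous_Suc_witness[OF first(2) not_extendable] by blast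
  then have "w \<in> {1..fst G}"
    using ordered_graph_edgeD(3)[OF ordered_graph] by blast
  moreover have "x \<in> {l1..h1} \<union> {l2..h2}"
    using w by auto
  ultimately show False
    using module_edge_inside[OF module] module_edge_outside[OF module] in_blocks w
    by (cases "w \<in> {l1..h1} \<union> {l2..h2}") (auto simp: insert_commute)
qed

lemma ex_third_of_three: "\<exists>j\<in>{1, 2, 3::nat}. j \<noteq> p \<and> j \<noteq> q"
  by (cases "p = 1"; cases "q = 1"; cases "p = 2"; cases "q = 2") auto

text \<open>A gap vertex whose pairs with the blocks have the other status appears as the only vertex of
  its kind in a sample, at the rank where the two parts meet.\<close>

lemma card_slice_ge_if_gap_vertex:
  assumes module: "uniform_module" and "3 \<le> n" and z: "h1 < z" "z < l2"
    and ne: "({z, h1} \<in> snd G) \<noteq> ({l1, h1} \<in> snd G)"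
  shows "n \<le> card (slice P n)"
proof -
  have adm: "admissible {} {z} {}"
    unfolding admissible_def using z by auto
  have z_out: "z \<in> {1..fst G}" "z \<notin> {l1..h1} \<union> {l2..h2}"
    using z first second block_sizes by auto
  have "inj_on (\<lambda>a. induced_edges G (sample {} {z} {} a (n - Suc a))) {0..<n}"
  proof (rule linorder_inj_onI')
    fix a a' assume a: "a \<in> {0..<n}" "a' \<in> {0..<n}" "a < a'"
    have le_n: "a \<le> n" "n - Suc a \<le> n" "a' \<le> n" "n - Suc a' \<le> n"
      and card: "card {} + a + card {z} + (n - Suc a) + card {} = n"
        "card {} + a' + card {z} + (n - Suc a') + card {} = n"
      using a by auto
    note R = sample_ranks[OF adm le_n(1,2)] and R' = sample_ranks[OF adm le_n(3,4)]
    have rank_z: "rank (sample {} {z} {} a (n - Suc a)) z = Suc a"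
      "rank (sample {} {z} {} a' (n - Suc a')) z = Suc a'"
      using R(4) R'(4) by auto
    obtain j where j: "j \<in> {1, 2, 3}" "j \<noteq> Suc a" "j \<noteq> Suc a'"
      using ex_third_of_three by blast
    then have "1 \<le> j" "j \<le> n"
      using \<open>3 \<le> n\<close> by auto
    obtain u where u: "u \<in> sample {} {z} {} a (n - Suc a)"
      "rank (sample {} {z} {} a (n - Suc a)) u = j"
      "u \<in> {l1..h1} \<union> {l2..h2}"
      using ex_block_vertex_of_rank[OF adm le_n(1,2) card(1) \<open>1 \<le> j\<close> \<open>j \<le> n\<close>] rank_z j by auto
    obtain u1 where u1: "u1 \<in> sample {} {z} {} a' (n - Suc a')"
      "rank (sample {} {z} {} a' (n - Suc a')) u1 = Suc a" "u1 \<in> {l1..h1} \<union> {l2..h2}"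
      using ex_block_vertex_of_rank[OF adm le_n(3,4) card(2), of "Suc a"] rank_z a by auto
    obtain u2 where u2: "u2 \<in> sample {} {z} {} a' (n - Suc a')"
      "rank (sample {} {z} {} a' (n - Suc a')) u2 = j" "u2 \<in> {l1..h1} \<union> {l2..h2}"
      using ex_block_vertex_of_rank[OF adm le_n(3,4) card(2) \<open>1 \<le> j\<close> \<open>j \<le> n\<close>] rank_z j by auto
    have "u1 \<noteq> u2"
      using u1 u2 j by auto
    then have "{u1, u2} \<in> snd G \<longleftrightarrow> {l1, h1} \<in> snd G"
      using module_edge_inside[OF module u1(3) u2(3)] by simp
    moreover have "{z, u} \<in> snd G \<longleftrightarrow> {z, h1} \<in> snd G"
      using module_edge_outside[OF module z_out u(3)] .
    ultimately have "({z, u} \<in> snd G) \<noteq> ({u1, u2} \<in> snd G)"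
      using ne by (simp add: insert_commute)
    then show "induced_edges G (sample {} {z} {} a (n - Suc a)) \<noteq>
        induced_edges G (sample {} {z} {} a' (n - Suc a'))"
      using induced_edges_neq[OF R(7) R'(7) mem_sample(3) u(1) u1(1) u2(1)] rank_z u u1 u2 by simp
  qed
  then show ?thesis
    using card_slice_ge_samples[OF adm, of "{0..<n}" "\<lambda>a. n - Suc a"] by simp
qed

text \<open>If moreover every gap vertex has the inner status towards the blocks, the module extended by
  \<open>Suc h1\<close> still has all pairs of the same status, and the witness \<open>w\<close> that separates \<open>Suc h1\<close> from
  the first block lies outside it.\<close>

context
  assumes module: "uniform_module"
    and gap_uniform: "\<forall>z. h1 < z \<and> z < l2 \<longrightarrow> ({z, h1} \<in> snd G \<longleftrightarrow> {l1, h1} \<in> snd G)"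
begin

lemma edge_extended_module:
  assumes "u \<in> insert (Suc h1) ({l1..h1} \<union> {l2..h2})" "u' \<in> insert (Suc h1) ({l1..h1} \<union> {l2..h2})"
    and "u \<noteq> u'"
  shows "{u, u'} \<in> snd G \<longleftrightarrow> {l1, h1} \<in> snd G"
proof -
  have gap: "h1 < Suc h1" "Suc h1 < l2"
    using module_gap[OF module] by auto
  have v: "Suc h1 \<in> {1..fst G}" "Suc h1 \<notin> {l1..h1} \<union> {l2..h2}"
    using gap second block_sizes by auto
  have "{Suc h1, h1} \<in> snd G \<longleftrightarrow> {l1, h1} \<in> snd G"
    using gap_uniform gap by blast
  then have "{Suc h1, x} \<in> snd G \<longleftrightarrow> {l1, h1} \<in> snd G" if "x \<in> {l1..h1} \<union> {l2..h2}" for x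
    using module_edge_outside[OF module v that] by simp
  then show ?thesis
    using assms module_edge_inside[OF module] by (auto simp: insert_commute)
qed

context
  fixes w :: nat
  assumes w: "w \<in> {1..fst G}" "w \<notin> {l1..h1} \<union> {l2..h2}" "w \<noteq> Suc h1"
    "({Suc h1, w} \<in> snd G) \<noteq> ({w, h1} \<in> snd G)"
begin

lemma edge_sample_uniform:
  assumes "admissible L Mid U" "L \<union> Mid \<union> U \<subseteq> {Suc h1, w}" "a \<le> n" "c \<le> n"
    and "u \<in> sample L Mid U a c" "u' \<in> sample L Mid U a c" "u \<noteq> u'" "u \<noteq> w" "u' \<noteq> w"
  shows "{u, u'} \<in> snd G \<longleftrightarrow> {l1, h1} \<in> snd G"
  using edge_extended_module sample_in_blocks[OF assms(5) _ _ _ assms(3,4)]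
    sample_in_blocks[OF assms(6) _ _ _ assms(3,4)] assms(2,7-9) by blast

lemma edge_sample_witness:
  assumes "admissible L Mid U" "L \<union> Mid \<union> U \<subseteq> {Suc h1, w}" "a \<le> n" "c \<le> n"
    and "u \<in> sample L Mid U a c" "u \<noteq> w" "u \<noteq> Suc h1"
  shows "{w, u} \<in> snd G \<longleftrightarrow> {w, h1} \<in> snd G"
  using module_edge_outside[OF module w(1,2)] sample_in_blocks[OF assms(5) _ _ _ assms(3,4)]
    assms(2,6,7)
  by blast

lemma ex_uniform_pair_of_ranks:
  assumes adm: "admissible L Mid U" "L \<union> Mid \<union> U \<subseteq> {Suc h1, w}" and "a \<le> n" "c \<le> n"
    and card: "card L + a + card Mid + c + card U = n"
    and pq: "1 \<le> p" "p \<le> n" "1 \<le> q" "q \<le> n" "p \<noteq> q"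
    and w_rank: "w \<in> sample L Mid U a c \<Longrightarrow> rank (sample L Mid U a c) w \<notin> {p, q}"
  obtains u u' where "u \<in> sample L Mid U a c" "u' \<in> sample L Mid U a c"
    "rank (sample L Mid U a c) u = p" "rank (sample L Mid U a c) u' = q"
    "{u, u'} \<in> snd G \<longleftrightarrow> {l1, h1} \<in> snd G"
proof -
  obtain u u' where u: "u \<in> sample L Mid U a c" "rank (sample L Mid U a c) u = p"
    and u': "u' \<in> sample L Mid U a c" "rank (sample L Mid U a c) u' = q"
    using ex_sample_vertex_of_rank[OF adm(1) assms(3,4) card] pq by metis
  then have "u \<noteq> u'" "u \<noteq> w" "u' \<noteq> w"
    using pq(5) w_rank by auto
  then show ?thesis
    using that u u' edge_sample_uniform[OF adm assms(3,4) u(1) u'(1)] by blast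
qed

text \<open>If \<open>w\<close> has the same rank in all samples of a family, its exceptional pair reveals the varying
  rank of \<open>Suc h1\<close>; the sample inside the first block supplies one more graph.\<close>

context
  fixes L Mid U :: "nat set" and r d :: nat
  assumes adm: "admissible L Mid U" "L \<union> Mid \<union> U = {Suc h1, w}"
    and card_sample: "\<And>a. a < n - 1 \<Longrightarrow> card L + a + card Mid + (n - Suc (Suc a)) + card U = n"
    and rank_w: "\<And>a. a < n - 1 \<Longrightarrow> rank (sample L Mid U a (n - Suc (Suc a))) w = r"
    and rank_v: "\<And>a. a < n - 1 \<Longrightarrow> rank (sample L Mid U a (n - Suc (Suc a))) (Suc h1) = a + d"
    and r: "\<And>a. a < n - 1 \<Longrightarrow> r \<noteq> a + d" "1 \<le> r" "r \<le> n" and d: "1 \<le> d" "d \<le> 2"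
begin

abbreviation marked_sample :: "nat \<Rightarrow> nat set" where
  "marked_sample a \<equiv> sample L Mid U a (n - Suc (Suc a))"

lemma marked_sample_facts:
  assumes "a < n - 1"
  shows "a \<le> n" "n - Suc (Suc a) \<le> n" "finite (marked_sample a)" "1 \<le> a + d" "a + d \<le> n"
  using assms d sample_ranks(7)[OF adm(1), of a "n - Suc (Suc a)"] by auto

lemma mem_marked_sample: "w \<in> marked_sample a" "Suc h1 \<in> marked_sample a"
  using adm(2) unfolding block_sample_def by blast+

lemma ex_witness_edge_of_rank:
  assumes a: "a < n - 1" and p: "1 \<le> p" "p \<le> n" "p \<noteq> r" "p \<noteq> a + d"
  obtains u where "u \<in> marked_sample a" "rank (marked_sample a) u = p"
    "{w, u} \<in> snd G \<longleftrightarrow> {w, h1} \<in> snd G"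
proof -
  note a_facts = marked_sample_facts[OF a]
  obtain u where u: "u \<in> marked_sample a" "rank (marked_sample a) u = p"
    using ex_sample_vertex_of_rank[OF adm(1) a_facts(1,2) card_sample[OF a] p(1,2)] by blast
  moreover have "u \<noteq> w" "u \<noteq> Suc h1"
    using u rank_w[OF a] rank_v[OF a] p(3,4) by auto
  moreover have "L \<union> Mid \<union> U \<subseteq> {Suc h1, w}"
    using adm(2) by simp
  ultimately show ?thesis
    using that edge_sample_witness[OF adm(1) _ a_facts(1,2)] by simp
qed

lemma inj_on_marked_samples: "inj_on (\<lambda>a. induced_edges G (marked_sample a)) {0..<n - 1}"
proof (rule linorder_inj_onI')
  fix a a' assume "a \<in> {0..<n - 1}" "a' \<in> {0..<n - 1}" "a < a'"
  then have a: "a < n - 1" "a' < n - 1" "a + d \<noteq> a' + d"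
    by auto
  obtain u where u: "u \<in> marked_sample a'" "rank (marked_sample a') u = a + d"
    "{w, u} \<in> snd G \<longleftrightarrow> {w, h1} \<in> snd G"
    by (rule ex_witness_edge_of_rank[OF a(2) marked_sample_facts(4,5)[OF a(1)]
          r(1)[OF a(1), symmetric] a(3)])
  have "({w, Suc h1} \<in> snd G) \<noteq> ({w, u} \<in> snd G)"
    using u(3) w(4) by (simp add: insert_commute)
  then show "induced_edges G (marked_sample a) \<noteq> induced_edges G (marked_sample a')"
    using induced_edges_neq[OF marked_sample_facts(3)[OF a(1)] marked_sample_facts(3)[OF a(2)]
        mem_marked_sample(1,2,1) u(1)] rank_w a rank_v[OF a(1)] u(2) by simp
qed

lemma marked_sample_ne_first_block_sample:
  assumes a: "a < n - 1" and "3 \<le> n"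
  shows "induced_edges G (marked_sample a) \<noteq> induced_edges G first_block_sample"
proof -
  note a_facts = marked_sample_facts[OF a]
  show ?thesis
  proof (cases "({w, Suc h1} \<in> snd G) = ({l1, h1} \<in> snd G)")
    case False
    obtain k k' where k: "k \<in> first_block_sample" "k' \<in> first_block_sample"
      "rank first_block_sample k = r" "rank first_block_sample k' = a + d"
      "{k, k'} \<in> snd G \<longleftrightarrow> {l1, h1} \<in> snd G"
      by (rule ex_first_block_pair_of_ranks[OF r(2,3) a_facts(4,5) r(1)[OF a]])
    show ?thesis
      using induced_edges_neq[OF a_facts(3) first_block_sample_facts(2) mem_marked_sample k(1,2)]
        rank_w[OF a] rank_v[OF a] k False by simp
  next
    case True
    obtain j where j: "j \<in> {1, 2, 3}" "j \<noteq> r" "j \<noteq> a + d"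
      using ex_third_of_three by blast
    then have j_range: "1 \<le> j" "j \<le> n"
      using \<open>3 \<le> n\<close> by auto
    obtain u where u: "u \<in> marked_sample a" "rank (marked_sample a) u = j"
      "{w, u} \<in> snd G \<longleftrightarrow> {w, h1} \<in> snd G"
      using ex_witness_edge_of_rank[OF a j_range j(2,3)] by blast
    obtain k k' where k: "k \<in> first_block_sample" "k' \<in> first_block_sample"
      "rank first_block_sample k = r" "rank first_block_sample k' = j"
      "{k, k'} \<in> snd G \<longleftrightarrow> {l1, h1} \<in> snd G"
      by (rule ex_first_block_pair_of_ranks[OF r(2,3) j_range j(2)[symmetric]])
    have "({w, u} \<in> snd G) \<noteq> ({k, k'} \<in> snd G)"
      using u(3) k(5) True w(4) by (simp add: insert_commute)
    then show ?thesis
      using induced_edges_neq[OF a_facts(3) first_block_sample_facts(2) mem_marked_sample(1) u(1)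
          k(1,2)]
        rank_w[OF a] u(2) k(3,4) by simp
  qed
qed

lemma card_slice_ge_marked_samples:
  assumes "3 \<le> n"
  shows "n \<le> card (slice P n)"
  using card_slice_ge_with_first_block_sample[OF adm(1) _ card_sample inj_on_marked_samples
      marked_sample_ne_first_block_sample] assms by simp

end

context
  assumes gap: "Suc h1 < w" "w < l2"
begin

abbreviation gap_sample :: "nat \<Rightarrow> nat set" where
  "gap_sample a \<equiv> sample {} {Suc h1, w} {} a (n - Suc (Suc a))"

lemma gap_sample_admissible: "admissible {} {Suc h1, w} {}" "{} \<union> {Suc h1, w} \<union> {} \<subseteq> {Suc h1, w}"
  unfolding admissible_def using gap by auto

lemma gap_sample_bounds:
  assumes "a < n - 1"
  shows "a \<le> n" "n - Suc (Suc a) \<le> n"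
    "card {} + a + card {Suc h1, w} + (n - Suc (Suc a)) + card {} = n"
  using assms gap by auto

lemma gap_sample_ranks:
  assumes "a < n - 1"
  shows "rank (gap_sample a) (Suc h1) = Suc a" "rank (gap_sample a) w = Suc (Suc a)"
proof -
  have "{Suc h1, w} \<inter> {..Suc h1} = {Suc h1}" "{Suc h1, w} \<inter> {..w} = {Suc h1, w}"
    using gap by auto
  then show "rank (gap_sample a) (Suc h1) = Suc a" "rank (gap_sample a) w = Suc (Suc a)"
    using sample_ranks(4)[OF gap_sample_admissible(1) gap_sample_bounds(1,2)[OF assms]] gap by auto
qed

text \<open>In \<open>gap_sample a\<close> the ranks \<open>Suc a\<close>, \<open>Suc (Suc a)\<close> hold \<open>Suc h1\<close>, \<open>w\<close>, and only this pair of
  vertices of a sample has the exceptional status.\<close>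

lemma gap_sample_neq:
  assumes a: "a < n - 1"
    and T: "finite T" "k \<in> T" "k' \<in> T" "rank T k = Suc a" "rank T k' = Suc (Suc a)"
    "{k, k'} \<in> snd G \<longleftrightarrow> {l1, h1} \<in> snd G"
  shows "induced_edges G (gap_sample a) \<noteq> induced_edges G T"
proof -
  have "{w, h1} \<in> snd G \<longleftrightarrow> {l1, h1} \<in> snd G"
    using gap_uniform gap by auto
  then have "({Suc h1, w} \<in> snd G) \<noteq> ({l1, h1} \<in> snd G)"
    using w(4) by simp
  then show ?thesis
    using induced_edges_neq[OF
        sample_ranks(7)[OF gap_sample_admissible(1) gap_sample_bounds(1,2)[OF a]] T(1)
        mem_sample(3)[of "Suc h1" "{Suc h1, w}"] mem_sample(3)[of w "{Suc h1, w}"] T(2,3)]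
      gap_sample_ranks[OF a] T(4-6) by simp
qed

lemma card_slice_ge_witness_in_gap:
  assumes "3 \<le> n"
  shows "n \<le> card (slice P n)"
proof (rule card_slice_ge_with_first_block_sample[OF gap_sample_admissible(1) _
      gap_sample_bounds(3)])
  show "inj_on (\<lambda>a. induced_edges G (gap_sample a)) {0..<n - 1}"
  proof (rule linorder_inj_onI')
    fix a a' assume "a \<in> {0..<n - 1}" "a' \<in> {0..<n - 1}" "a < a'"
    then have a: "a < n - 1" "a' < n - 1" "1 \<le> Suc a" "Suc a \<le> n" "1 \<le> Suc (Suc a)"
      "Suc (Suc a) \<le> n" "Suc a \<noteq> Suc (Suc a)"
      "w \<in> gap_sample a' \<Longrightarrow> rank (gap_sample a') w \<notin> {Suc a, Suc (Suc a)}"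
      using gap_sample_ranks by auto
    obtain k k' where k: "k \<in> gap_sample a'" "k' \<in> gap_sample a'" "rank (gap_sample a') k = Suc a"
      "rank (gap_sample a') k' = Suc (Suc a)" "{k, k'} \<in> snd G \<longleftrightarrow> {l1, h1} \<in> snd G"
      by (rule ex_uniform_pair_of_ranks[OF gap_sample_admissible gap_sample_bounds[OF a(2)] a(3-)])
    show "induced_edges G (gap_sample a) \<noteq> induced_edges G (gap_sample a')"
      by (rule gap_sample_neq[OF a(1)
            sample_ranks(7)[OF gap_sample_admissible(1) gap_sample_bounds(1,2)[OF a(2)]] k])
  qed
  fix a assume a: "a < n - 1"
  then have "1 \<le> Suc a" "Suc a \<le> n" "1 \<le> Suc (Suc a)" "Suc (Suc a) \<le> n" "Suc a \<noteq> Suc (Suc a)"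
    by auto
  then obtain k k' where k: "k \<in> first_block_sample" "k' \<in> first_block_sample"
    "rank first_block_sample k = Suc a" "rank first_block_sample k' = Suc (Suc a)"
    "{k, k'} \<in> snd G \<longleftrightarrow> {l1, h1} \<in> snd G"
    by (rule ex_first_block_pair_of_ranks)
  show "induced_edges G (gap_sample a) \<noteq> induced_edges G first_block_sample"
    by (rule gap_sample_neq[OF a first_block_sample_facts(2) k])
qed (use assms in simp)

end

lemma card_slice_ge_witness_left:
  assumes "3 \<le> n" "w < l1"
  shows "n \<le> card (slice P n)"
proof (rule card_slice_ge_marked_samples[of "{w}" "{Suc h1}" "{}" 1 2])
  show adm: "admissible {w} {Suc h1} {}"
    unfolding admissible_def using w(1) assms module_gap[OF module] by auto
  fix a assume a: "a < n - 1"
  show "card {w} + a + card {Suc h1} + (n - Suc (Suc a)) + card {} = n"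
    using a by simp
  have "a \<le> n" "n - Suc (Suc a) \<le> n"
    using a by auto
  note R = sample_ranks[OF adm this]
  show "rank (sample {w} {Suc h1} {} a (n - Suc (Suc a))) w = 1"
    using R(2)[of w] by simp
  show "rank (sample {w} {Suc h1} {} a (n - Suc (Suc a))) (Suc h1) = a + 2"
    using R(4)[of "Suc h1"] by simp
qed (use assms in auto)

lemma card_slice_ge_witness_right:
  assumes "3 \<le> n" "h2 < w"
  shows "n \<le> card (slice P n)"
proof (rule card_slice_ge_marked_samples[of "{}" "{Suc h1}" "{w}" n 1])
  show adm: "admissible {} {Suc h1} {w}"
    unfolding admissible_def using w(1) assms module_gap[OF module] by auto
  fix a assume a: "a < n - 1"
  show "card {} + a + card {Suc h1} + (n - Suc (Suc a)) + card {w} = n"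
    using a by simp
  have "a \<le> n" "n - Suc (Suc a) \<le> n"
    using a by auto
  note R = sample_ranks[OF adm this]
  show "rank (sample {} {Suc h1} {w} a (n - Suc (Suc a))) w = n"
    using R(6)[of w] a by simp
  show "rank (sample {} {Suc h1} {w} a (n - Suc (Suc a))) (Suc h1) = a + 1"
    using R(4)[of "Suc h1"] by simp
  show "n \<noteq> a + 1"
    using a by simp
qed (use assms in auto)

lemma card_slice_ge_witness:
  assumes "3 \<le> n"
  shows "n \<le> card (slice P n)"
proof -
  consider "w < l1" | "Suc h1 < w" "w < l2" | "h2 < w"
    using w(2,3) by fastforce
  then show ?thesis
    using card_slice_ge_witness_left card_slice_ge_witness_in_gap card_slice_ge_witness_right assms
    by cases auto
qed

end

lemma card_slice_ge_if_uniform_gap: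
  assumes "3 \<le> n"
  shows "n \<le> card (slice P n)"
proof -
  obtain x w where xw: "x \<in> {l1..h1}" "w \<noteq> x" "w \<noteq> Suc h1"
    "({x, w} \<in> snd G) \<noteq> ({Suc h1, w} \<in> snd G)"
    using not_homogeneous_Suc_witness[OF first(2) not_extendable] by blast
  then have w_range: "w \<in> {1..fst G}"
    using ordered_graph_edgeD(3)[OF ordered_graph] by blast
  have w_out: "w \<notin> {l1..h1} \<union> {l2..h2}"
  proof
    assume "w \<in> {l1..h1} \<union> {l2..h2}"
    then have "{x, w} \<in> snd G \<longleftrightarrow> {l1, h1} \<in> snd G" "{Suc h1, w} \<in> snd G \<longleftrightarrow> {l1, h1} \<in> snd G"
      using edge_extended_module xw(1-3) by auto
    with xw(4) show False
      by simp
  qed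
  have "({Suc h1, w} \<in> snd G) \<noteq> ({w, h1} \<in> snd G)"
    using module_edge_outside[OF module w_range w_out, of x] xw by (simp add: insert_commute)
  with w_range w_out xw(3) show ?thesis
    using card_slice_ge_witness assms by blast
qed


end


lemma card_slice_ge:
  assumes "3 \<le> n"
  shows "n \<le> card (slice P n)"
proof (cases "uniform_module")
  case False
  then consider "({l1, h1} \<in> snd G) \<noteq> ({h1, l2} \<in> snd G)"
    | "({l2, h2} \<in> snd G) \<noteq> ({h1, l2} \<in> snd G)"
    | z where "z \<in> {1..fst G}" "z \<notin> {l1..h1}" "z \<notin> {l2..h2}" "({z, h1} \<in> snd G) \<noteq> ({z, l2} \<in> snd G)"
    unfolding uniform_module_def by blast
  then show ?thesis
  proof cases
    case 1
    then show ?thesis by (rule card_slice_ge_if_first_ne_across)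
  next
    case 2
    then show ?thesis by (rule card_slice_ge_if_second_ne_across)
  next
    case 3
    then show ?thesis by (rule card_slice_ge_if_separated)
  qed
next
  case module: True
  show ?thesis
  proof (cases "\<exists>z. h1 < z \<and> z < l2 \<and> ({z, h1} \<in> snd G) \<noteq> ({l1, h1} \<in> snd G)")
    case True
    then obtain z where "h1 < z" "z < l2" "({z, h1} \<in> snd G) \<noteq> ({l1, h1} \<in> snd G)"
      by blast
    then show ?thesis
      by (rule card_slice_ge_if_gap_vertex[OF module assms])
  next
    case False
    then have "\<forall>z. h1 < z \<and> z < l2 \<longrightarrow> ({z, h1} \<in> snd G \<longleftrightarrow> {l1, h1} \<in> snd G)"
      by blast
    then show ?thesis
      by (rule card_slice_ge_if_uniform_gap[OF module _ assms])
  qed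
qed

end

lemma induced_edges_pair_nonempty_iff:
  assumes "ordered_graph G" "x \<noteq> y"
  shows "induced_edges G {x, y} \<noteq> {} \<longleftrightarrow> {x, y} \<in> snd G"
proof
  assume "induced_edges G {x, y} \<noteq> {}"
  then obtain a b where ab: "a \<in> {x, y}" "b \<in> {x, y}" "{a, b} \<in> snd G"
    unfolding induced_edges_def by blast
  then have "a \<noteq> b"
    using ordered_graph_edgeD(1)[OF assms(1)] by blast
  with ab show "{x, y} \<in> snd G"
    by (auto simp: insert_commute)
next
  assume "{x, y} \<in> snd G"
  then show "induced_edges G {x, y} \<noteq> {}"
    using induced_edges_iff[of "{x, y}" x y G] by auto
qed

lemma two_le_card_slice_two:
  assumes her: "hereditary P" and GP: "G \<in> P"
    and block: "1 \<le> lo" "Suc hi \<le> fst G" "homogeneous_interval G lo hi"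
    and not_extendable: "\<not> homogeneous_interval G lo (Suc hi)"
  shows "2 \<le> card (slice P 2)"
proof -
  have og: "ordered_graph G"
    using her GP unfolding hereditary_def by blast
  obtain x w where xw: "x \<in> {lo..hi}" "w \<noteq> x" "w \<noteq> Suc hi"
    "({x, w} \<in> snd G) \<noteq> ({Suc hi, w} \<in> snd G)"
    by (rule not_homogeneous_Suc_witness[OF block(3) not_extendable])
  then have "w \<in> {1..fst G}"
    using ordered_graph_edgeD(3)[OF og] by blast
  then have "{x, w} \<subseteq> {1..fst G}" "{Suc hi, w} \<subseteq> {1..fst G}"
    using xw(1) block by auto
  moreover have "card {x, w} = 2" "card {Suc hi, w} = 2"
    using xw(2,3) by auto
  ultimately have in_slice: "induced_edges G {x, w} \<in> slice P 2"
    "induced_edges G {Suc hi, w} \<in> slice P 2"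
    using induced_edges_in_slice[OF her GP] by metis+
  have "induced_edges G {x, w} \<noteq> {} \<longleftrightarrow> {x, w} \<in> snd G"
    "induced_edges G {Suc hi, w} \<noteq> {} \<longleftrightarrow> {Suc hi, w} \<in> snd G"
    using induced_edges_pair_nonempty_iff[OF og] xw(2,3) by auto
  then have "induced_edges G {x, w} \<noteq> induced_edges G {Suc hi, w}"
    using xw(4) by metis
  then have "card {induced_edges G {x, w}, induced_edges G {Suc hi, w}} = 2"
    by simp
  moreover have "card {induced_edges G {x, w}, induced_edges G {Suc hi, w}} \<le> card (slice P 2)"
    using in_slice by (intro card_mono[OF finite_slice[OF her]]) auto
  ultimately show ?thesis
    by simp
qed

lemma card_slice_ge_of_two_large_blocks:
  assumes her: "hereditary P" and large: "\<forall>m. \<exists>G\<in>P. hb_seq G 2 \<ge> m"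
  shows "n \<le> card (slice P n)"
proof -
  have "\<forall>m. \<exists>G\<in>P. hb_seq G (1 + 1) \<ge> m"
    using large by (simp add: numeral_2_eq_2)
  then obtain G lo hi where GP: "G \<in> P" and chain: "block_chain G 1 (Suc n) lo hi"
    by (rule obtain_block_chain[OF her])
  have first: "1 \<le> lo 0" "homogeneous_interval G (lo 0) (hi 0)" "n < card {lo 0..hi 0}"
    and second: "hi 0 < lo 1" "hi 1 \<le> fst G" "homogeneous_interval G (lo 1) (hi 1)"
      "n < card {lo 1..hi 1}"
    and not_extendable: "\<not> homogeneous_interval G (lo 0) (Suc (hi 0))"
    using chain unfolding block_chain_def by auto
  consider "n = 0" | "n = 1" | "n = 2" | "3 \<le> n"
    by linarith
  then show ?thesis
  proof cases
    case 1
    then show ?thesis by simp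
  next
    case 2
    have "{hi 0} \<subseteq> {1..fst G}"
      using first second by auto
    then have "induced_edges G {hi 0} \<in> slice P n"
      using induced_edges_in_slice[OF her GP, of "{hi 0}"] 2 by simp
    then have "0 < card (slice P n)"
      using finite_slice[OF her] card_gt_0_iff by blast
    then show ?thesis
      using 2 by simp
  next
    case 3
    have "Suc (hi 0) \<le> fst G"
      using second by simp
    then show ?thesis
      using two_le_card_slice_two[OF her GP first(1) _ first(2) not_extendable] 3 by simp
  next
    case 4
    interpret two_blocks P G n "lo 0" "hi 0" "lo 1" "hi 1"
      by (rule two_blocks.intro[OF her GP first second not_extendable])
    show ?thesis
      using card_slice_ge 4 .
  qed
qed

theorem lemma9:
  fixes P :: "ograph set" and k :: nat
  assumes "hereditary P"
    and "k \<ge> 1"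
    and "\<forall>m. \<exists>G \<in> P. hb_seq G (k + 1) \<ge> m"
  shows "(\<forall>n. card (slice P n) \<ge> (n - (3 * k + 2)) choose k)
         \<and> (k = 1 \<longrightarrow> (\<forall>n. card (slice P n) \<ge> n))"
proof (intro conjI allI impI)
  fix n
  obtain G lo hi where "G \<in> P" "block_chain G k (n + 2 * k) lo hi"
    by (rule obtain_block_chain[OF assms(1,3)])
  then have "(n - 2 * k) choose k \<le> card (slice P n)"
    by (rule card_slice_ge_choose[OF assms(1)])
  then show "(n - (3 * k + 2)) choose k \<le> card (slice P n)"
    using binomial_right_mono[of "n - (3 * k + 2)" "n - 2 * k" k] by linarith
next
  fix n
  assume "k = 1"
  then show "n \<le> card (slice P n)"
    using card_slice_ge_of_two_large_blocks[OF assms(1)] assms(3) by (simp add: numeral_2_eq_2)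
qed

end
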